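(* Let $(G_n)_{n\ge 1}$ be a sequence of finite groups such that $\lim_{n \to \infty} |G_n| = \infty$. For all $n$, let $C_n = \sqrt{ \Theta(G_n)\, |G_n| \log |G_n| }$. Then for any $\varepsilon > 0$, $$ \lim_{n \to \infty} P(G_n, \lceil (1+\varepsilon) C_n \rceil ) = 1 \quad\text{and}\quad \lim_{n \to \infty} P(G_n, \lfloor (1-\varepsilon) C_n \rfloor ) = 0 . $$
   Context: All logarithms are natural. For a finite group $G$ and $x\in G$, $C(x)=\{g\in G: gx=xg\}$ is the centralizer of $x$. For a finite group $G$ of order $n\ge 2$, $\Theta(G)$ is defined as the unique number $\xi\in[1/2,1]$ satisfying $$ 2 \xi \log n = \log \sum_{x \in G} \exp \Big( \xi \log n \cdot \frac{|C(x)|}{n} \Big) $$ (the function $\xi\mapsto 2\xi\log n-\log\sum_{x}\exp(\xi\log n\,|C(x)|/n)$ is continuous, strictly increasing on $[1/2,1]$, negative at $1/2$ and nonnegative at $1$). For a finite group $G$ and a positive integer $k$, let $a_1,\dots,a_k,b_1,\dots,b_k$ be $2k$ independent uniformly random elements of $G$ (repetitions allowed), $A=\{a_1,\dots,a_k\}$, $B=\{b_1,\dots,b_k\}$, and $AB=\{ab: a\in A, b\in B\}$. Define $P(G,k)=\Pr[AB\cup BA=G]$. *)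

theory Defs
  imports "HOL-Analysis.Analysis" "HOL-Algebra.Group"
begin

definition centr :: "('a, 'b) monoid_scheme \<Rightarrow> 'a \<Rightarrow> 'a set" where
  "centr G x = {g \<in> carrier G. g \<otimes>\<^bsub>G\<^esub> x = x \<otimes>\<^bsub>G\<^esub> g}"

definition Theta :: "('a, 'b) monoid_scheme \<Rightarrow> real" where
  "Theta G = (let n = real (card (carrier G)) in
     THE \<xi>. \<xi> \<in> {1/2..1} \<and>
        2 * \<xi> * ln n = ln (\<Sum>x\<in>carrier G. exp (\<xi> * ln n * real (card (centr G x)) / n)))"

definition setprod :: "('a, 'b) monoid_scheme \<Rightarrow> 'a set \<Rightarrow> 'a set \<Rightarrow> 'a set" where
  "setprod G A B = {a \<otimes>\<^bsub>G\<^esub> b | a b. a \<in> A \<and> b \<in> B}"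

text \<open>Uniform probability
  is realised as counting over all (|G|^k)^2 tuples.\<close>
definition Pcov :: "('a, 'b) monoid_scheme \<Rightarrow> nat \<Rightarrow> real" where
  "Pcov G k = real (card {(a, b). a \<in> {..<k} \<rightarrow>\<^sub>E carrier G \<and> b \<in> {..<k} \<rightarrow>\<^sub>E carrier G \<and>
        setprod G (a ` {..<k}) (b ` {..<k}) \<union> setprod G (b ` {..<k}) (a ` {..<k}) = carrier G})
     / real (card (carrier G)) ^ (2 * k)"

end

theory Submission
  imports Defs "HOL-Algebra.Coset" "HOL-Real_Asymp.Real_Asymp"
begin

text \<open>
  Fix \<open>A = {a\<^sub>1,\<dots>,a\<^sub>k}\<close>. An element \<open>g\<close> lies outside \<open>AB \<union> BA\<close> exactly when every \<open>b\<^sub>j\<close>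
  avoids \<open>S\<^sub>g(A) = {a\<inverse>g, ga\<inverse> : a \<in> A}\<close>, so \<open>g\<close> is uncovered with probability
  \<open>E (1 - |S\<^sub>g(A)|/n)\<^sup>k\<close>. The two halves of \<open>S\<^sub>g(A)\<close> overlap essentially only at the \<open>a\<close>
  commuting with \<open>g\<close>, so \<open>|S\<^sub>g(A)| \<approx> 2k - k|C(g)|/n\<close> and
  \<open>Pr[g uncovered] \<approx> exp (-(k\<^sup>2/n)(2 - |C(g)|/n))\<close>; exponential moments of \<open>|S\<^sub>g(A)|\<close>
  make this precise in both directions. For \<open>k\<^sup>2 = \<xi> n log n\<close> the equation defining \<open>\<Theta>\<close>
  says exactly that the expected number of uncovered elements, \<open>\<Sum>\<^sub>g exp (-\<xi> log n (2 - |C(g)|/n))\<close>,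
  equals \<open>1\<close> at \<open>\<xi> = \<Theta>\<close>. Above the threshold the expectation is \<open>O(n\<^sup>-\<^sup>\<epsilon>)\<close> and the union
  bound applies; below it the expectation is at least \<open>n\<^sup>\<epsilon>\<^sup>/\<^sup>2\<close> and the second moment method
  applies, since two uncovered events are nearly independent unless \<open>g, h\<close> are conjugate
  with \<open>|C(g)|\<close> large, and by orbit--stabilizer such \<open>g\<close> have few conjugates.
\<close>

lemma exp_le_chord:
  fixes z M t :: real
  assumes "0 \<le> z" "z \<le> M" "0 < M" "0 \<le> t"
  shows "exp (t*z) \<le> 1 + z * (exp (t*M) - 1) / M"
proof -
  have "exp ((1 - z/M) *\<^sub>R 0 + (z/M) *\<^sub>R (t*M)) \<le> (1 - z/M) * exp 0 + (z/M) * exp (t*M)"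
    by (rule convex_onD[OF exp_convex]) (use assms in auto)
  moreover have "(1 - z/M) *\<^sub>R 0 + (z/M) *\<^sub>R (t*M) = t*z" using assms by simp
  ultimately have "exp (t*z) \<le> (1 - z/M) + (z/M) * exp (t*M)" by simp
  also have "\<dots> = 1 + z * (exp (t*M) - 1) / M" using assms by (simp add: field_simps)
  finally show ?thesis .
qed

lemma exp_minus_one_le:
  fixes y :: real
  assumes "y \<ge> 0"
  shows "exp y - 1 \<le> y * exp y"
proof -
  have "1 - y \<le> exp (-y)" using exp_ge_add_one_self[of "-y"] by simp
  then have "(1 - y) * exp y \<le> exp (-y) * exp y" by (intro mult_right_mono) auto
  then show ?thesis by (simp add: exp_minus field_simps)
qed

lemma diff_power_le_exp:
  fixes s n :: real and k :: nat
  assumes "0 \<le> s" "s \<le> n" "n > 0"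
  shows "(n - s)^k \<le> n^k * exp (- (k/n) * s)"
proof -
  have "(n - s)^k = n^k * (1 - s/n)^k" using assms by (simp add: power_mult_distrib[symmetric] field_simps)
  also have "(1 - s/n)^k \<le> (exp (- (s/n)))^k"
    using exp_ge_add_one_self[of "-(s/n)"] assms by (intro power_mono) (auto simp: field_simps)
  also have "(exp (- (s/n)))^k = exp (- (k/n) * s)" by (simp add: exp_of_nat_mult[symmetric] field_simps)
  finally show ?thesis using assms by (simp add: mult_left_mono)
qed

lemma diff_power_ge_exp:
  fixes s n :: real and k :: nat
  assumes "0 \<le> s" "2 * s \<le> n" "n > 0" "s \<le> 2*k"
  shows "(n - s)^k \<ge> n^k * exp (- (k/n + 4*(k/n)^2) * s)"
proof -
  define x where "x = s/n"
  have x0: "0 \<le> x" and x1: "x \<le> 1/2" using assms unfolding x_def by (auto simp: field_simps)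
  have "(n - s)^k = n^k * (1 - x)^k" using assms unfolding x_def by (simp add: power_mult_distrib[symmetric] field_simps)
  moreover have "(1 - x)^k = exp (k * ln (1 - x))" using x1 by (subst exp_of_nat_mult) simp
  moreover have "k * ln (1 - x) \<ge> k * (- x - 2 * x^2)"
    using ln_one_minus_pos_lower_bound[OF x0 x1] by (intro mult_left_mono) auto
  moreover have "2 * x^2 * k \<le> 4*(k/n)^2 * s"
  proof -
    have "2 * x^2 * k = 2 * (s/n) * (s/n) * k" unfolding x_def by (simp add: power2_eq_square)
    also have "\<dots> \<le> 2 * (s/n) * (2*k/n) * k"
      using assms by (intro mult_right_mono mult_left_mono divide_right_mono) auto
    also have "\<dots> = 4*(k/n)^2 * s" by (simp add: power2_eq_square field_simps)
    finally show ?thesis .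
  qed
  moreover have "x * k = k/n * s" unfolding x_def by simp
  ultimately have "exp (- (k/n + 4*(k/n)^2) * s) \<le> (1 - x)^k" by (simp add: algebra_simps)
  then show ?thesis using assms \<open>(n - s)^k = n^k * (1 - x)^k\<close> by (simp add: mult_left_mono)
qed

lemma one_minus_power_ge:
  fixes x :: real and k :: nat
  assumes "0 \<le> x" "x \<le> 1"
  shows "1 - (1 - x)^k \<ge> k*x*(1 - k*x)"
proof -
  have "(1 - x)^k * (1 + k*x) \<le> (1 - x)^k * (1 + x)^k"
    using Bernoulli_inequality[of x k] assms by (intro mult_left_mono) auto
  also have "\<dots> = (1 - x^2)^k" by (simp add: power_mult_distrib[symmetric] power2_eq_square algebra_simps)
  also have "\<dots> \<le> 1" using assms by (intro power_le_one) (auto simp: power_le_one)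
  finally have "(1 - x)^k * (1 + k*x) \<le> 1" .
  moreover have pos: "0 < 1 + k*x" using assms by (simp add: add_pos_nonneg)
  ultimately have le1: "(1 - x)^k \<le> 1 / (1 + k*x)" by (subst pos_le_divide_eq[OF pos])
  define y where "y = k*x"
  have y0: "y \<ge> 0" unfolding y_def using assms by simp
  \<comment> \<open>\<open>(1 - y(1 - y))(1 + y) = 1 + y\<^sup>3\<close>\<close>
  have "1 / (1 + y) \<le> 1 - y*(1-y)" using y0 by (simp add: field_simps power3_eq_cube)
  then show ?thesis using le1 unfolding y_def by linarith
qed

text \<open>Absorbs the factor \<open>(e\<^sup>t\<^sup>M - 1)/M\<close> produced by \<open>exp_le_chord\<close> into an error of order \<open>\<kappa> t\<close>.\<close>
lemma exp_moment_error_le: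
  fixes k t \<kappa> M c B D :: real
  assumes "t \<ge> 0" "k \<ge> 0" "\<kappa> = k*t" "M > 0" "M \<le> 20" "0 \<le> c" "c \<le> B" "D \<ge> 0"
  shows "k * ((exp (t*M) - 1)/M * (c + D*t)) \<le> \<kappa>*c + (M*B + D) * (\<kappa> * t * exp (20*t))"
proof -
  have ctd: "c + D*t \<ge> 0" and \<kappa>0: "\<kappa> \<ge> 0" using assms by simp_all
  have expM: "exp (t*M) - 1 \<le> t*M * exp (t*M)" using exp_minus_one_le[of "t*M"] assms by simp
  have "k * ((exp (t*M) - 1)/M * (c + D*t)) \<le> k * (t * exp (t*M) * (c + D*t))"
    using expM assms ctd by (intro mult_left_mono mult_right_mono) (auto simp: field_simps)
  also have "\<dots> = \<kappa>*c + \<kappa> * (exp (t*M) - 1) * c + \<kappa> * D * t * exp (t*M)"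
    using assms by (simp add: algebra_simps)
  also have "\<kappa> * (exp (t*M) - 1) * c \<le> \<kappa> * (t*M * exp (t*M)) * B"
    using expM assms \<kappa>0 by (intro mult_mono mult_left_mono) auto
  also have "exp (t*M) \<le> exp (20*t)" using assms mult_left_mono[of M 20 t] by (simp add: mult.commute)
  then have "\<kappa>*c + \<kappa> * (t*M * exp (t*M)) * B + \<kappa> * D * t * exp (t*M)
      \<le> \<kappa>*c + \<kappa> * (t*M * exp (20*t)) * B + \<kappa> * D * t * exp (20*t)"
    using assms \<kappa>0 by (intro add_mono mult_left_mono mult_right_mono order_refl) auto
  also have "\<dots> = \<kappa>*c + (M*B + D) * (\<kappa> * t * exp (20*t))" by (simp add: algebra_simps)
  finally show ?thesis by simp
qed

lemma card_pairs_eq_sum_sum: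
  assumes "finite X" "finite Y"
  shows "real (card {(a, b). a \<in> X \<and> b \<in> Y \<and> P a b}) = (\<Sum>a\<in>X. \<Sum>b\<in>Y. of_bool (P a b))"
proof -
  have "{(a, b). a \<in> X \<and> b \<in> Y \<and> P a b} = Sigma X (\<lambda>a. {b\<in>Y. P a b})" by auto
  then have "card {(a, b). a \<in> X \<and> b \<in> Y \<and> P a b} = (\<Sum>a\<in>X. card {b\<in>Y. P a b})"
    using assms by (simp add: card_SigmaI)
  then show ?thesis using assms by (simp add: Int_def)
qed

lemma sum_swap3:
  "(\<Sum>a\<in>A. \<Sum>b\<in>B. \<Sum>c\<in>C. f a b c) = (\<Sum>c\<in>C. \<Sum>a\<in>A. \<Sum>b\<in>B. f a b c :: 'd::comm_monoid_add)"
proof -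
  have "(\<Sum>a\<in>A. \<Sum>b\<in>B. \<Sum>c\<in>C. f a b c) = (\<Sum>a\<in>A. \<Sum>c\<in>C. \<Sum>b\<in>B. f a b c)"
    by (intro sum.cong refl) (rule sum.swap)
  also have "\<dots> = (\<Sum>c\<in>C. \<Sum>a\<in>A. \<Sum>b\<in>B. f a b c)" by (rule sum.swap)
  finally show ?thesis .
qed

definition index_pairs :: "nat \<Rightarrow> (nat \<times> nat) set" where
  "index_pairs m = {(j, l). j < l \<and> l < m}"

lemma finite_index_pairs [simp]: "finite (index_pairs m)"
  unfolding index_pairs_def by (rule finite_subset[of _ "{..<m} \<times> {..<m}"]) auto

lemma card_index_pairs_le: "card (index_pairs m) \<le> m * m"
proof -
  have "card (index_pairs m) \<le> card ({..<m} \<times> {..<m})"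
    unfolding index_pairs_def by (rule card_mono) auto
  then show ?thesis by (simp add: card_cartesian_product)
qed

lemma index_pairs_Suc: "index_pairs (Suc m) = index_pairs m \<union> (\<lambda>j. (j, m)) ` {..<m}"
  unfolding index_pairs_def by auto

lemma index_pairs_2: "index_pairs 2 = {(0, 1)}"
  unfolding index_pairs_def by (auto simp: less_Suc_eq numeral_eq_Suc)

lemma index_pairs_4: "index_pairs 4 = {(0,1), (0,2), (0,3), (1,2), (1,3), (2,3)}"
  unfolding index_pairs_def by (auto simp: less_Suc_eq numeral_eq_Suc)

lemma card_image_ge_collisions:
  fixes h :: "nat \<Rightarrow> 'b"
  shows "real (card (h ` {..<m})) \<ge> real m - (\<Sum>(j, l)\<in>index_pairs m. of_bool (h j = h l))"
proof (induction m)
  case 0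
  then show ?case by (simp add: index_pairs_def)
next
  case (Suc m)
  have disj: "index_pairs m \<inter> (\<lambda>j. (j, m)) ` {..<m} = {}" unfolding index_pairs_def by auto
  have "(\<Sum>(j, l)\<in>index_pairs (Suc m). of_bool (h j = h l) :: real)
      = (\<Sum>(j, l)\<in>index_pairs m. of_bool (h j = h l)) + (\<Sum>(j, l)\<in>(\<lambda>j. (j, m)) ` {..<m}. of_bool (h j = h l))"
    unfolding index_pairs_Suc by (rule sum.union_disjoint[OF _ _ disj]) auto
  also have "(\<Sum>(j, l)\<in>(\<lambda>j. (j, m)) ` {..<m}. of_bool (h j = h l) :: real) = (\<Sum>j<m. of_bool (h j = h m))"
    by (subst sum.reindex) (auto simp: inj_on_def)
  finally have eq: "(\<Sum>(j, l)\<in>index_pairs (Suc m). of_bool (h j = h l) :: real)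
      = (\<Sum>(j, l)\<in>index_pairs m. of_bool (h j = h l)) + (\<Sum>j<m. of_bool (h j = h m))" .
  have img: "h ` {..<Suc m} = insert (h m) (h ` {..<m})" by (auto simp: lessThan_Suc)
  show ?case
  proof (cases "h m \<in> h ` {..<m}")
    case True
    then obtain j where j: "j < m" "h j = h m" by auto
    have "(1::real) \<le> (\<Sum>j<m. of_bool (h j = h m))"
      using member_le_sum[of j "{..<m}" "\<lambda>j. of_bool (h j = h m) :: real"] j by auto
    then show ?thesis using Suc.IH True unfolding eq img by (simp add: insert_absorb)
  next
    case False
    have "(0::real) \<le> (\<Sum>j<m. of_bool (h j = h m))" by (rule sum_nonneg) auto
    then show ?thesis using Suc.IH False unfolding eq img by simp
  qed
qed

lemma card_mult_exp_mean_le_sum_exp: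
  fixes s :: "'b \<Rightarrow> real"
  assumes "finite A" "A \<noteq> {}"
  shows "card A * exp ((\<Sum>a\<in>A. s a) / card A) \<le> (\<Sum>a\<in>A. exp (s a))"
proof -
  define \<mu> where "\<mu> = (\<Sum>a\<in>A. s a) / card A"
  have cA: "real (card A) \<noteq> 0" using assms by auto
  have "exp \<mu> * (1 + (s a - \<mu>)) \<le> exp (s a)" for a
    using mult_left_mono[OF exp_ge_add_one_self[of "s a - \<mu>"], of "exp \<mu>"] by (simp add: exp_diff)
  then have "(\<Sum>a\<in>A. exp \<mu> * (1 + (s a - \<mu>))) \<le> (\<Sum>a\<in>A. exp (s a))" by (rule sum_mono)
  moreover have "(\<Sum>a\<in>A. exp \<mu> * (1 + (s a - \<mu>))) = exp \<mu> * (card A + ((\<Sum>a\<in>A. s a) - card A * \<mu>))"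
    by (simp add: sum_distrib_left[symmetric] sum.distrib sum_subtractf)
  moreover have "card A * \<mu> = (\<Sum>a\<in>A. s a)" unfolding \<mu>_def using cA by simp
  ultimately show ?thesis unfolding \<mu>_def by (simp add: mult.commute)
qed

lemma card_Un_image_ge:
  fixes h :: "nat \<Rightarrow> 'b"
  assumes "finite S"
  shows "real (card (S \<union> h ` {..<m})) \<ge> real (card S) + m
           - ((\<Sum>(j, l)\<in>index_pairs m. of_bool (h j = h l)) + (\<Sum>j<m. of_bool (h j \<in> S)))"
proof -
  define T where "T = h ` {..<m}"
  have finT: "finite T" unfolding T_def by auto
  have "card (S \<union> T) = card S + card (T - S)"
    using assms finT by (metis Un_Diff_cancel card_Un_disjoint Diff_disjoint Int_commute finite_Diff)
  moreover have "card T = card (T - S) + card (T \<inter> S)"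
    using finT by (metis card_Int_Diff inf.commute add.commute)
  moreover have "T \<inter> S = h ` {j\<in>{..<m}. h j \<in> S}" unfolding T_def by auto
  then have "card (T \<inter> S) \<le> card {j\<in>{..<m}. h j \<in> S}"
    using card_image_le[of "{j\<in>{..<m}. h j \<in> S}" h] by simp
  moreover have "real (card {j\<in>{..<m}. h j \<in> S}) = (\<Sum>j<m. of_bool (h j \<in> S))"
    by (simp add: sum_of_bool_eq Int_def)
  moreover have "real (card T) \<ge> real m - (\<Sum>(j, l)\<in>index_pairs m. of_bool (h j = h l))"
    unfolding T_def by (rule card_image_ge_collisions)
  ultimately show ?thesis unfolding T_def by linarith
qed

section \<open>Centralizers and conjugation\<close>

context group
begin

lemma inv_commute_iff:
  assumes "x \<in> carrier G" "g \<in> carrier G"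
  shows "inv x \<otimes> g = g \<otimes> inv x \<longleftrightarrow> x \<otimes> g = g \<otimes> x"
  using assms by (metis inv_closed inv_inv inv_solve_left inv_solve_right m_assoc m_closed)

lemma inj_on_inv_mult: "g \<in> carrier G \<Longrightarrow> inj_on (\<lambda>x. inv x \<otimes> g) (carrier G)"
  by (auto simp: inj_on_def) (metis inv_closed inv_inv right_cancel)

lemma inj_on_mult_inv: "g \<in> carrier G \<Longrightarrow> inj_on (\<lambda>x. g \<otimes> inv x) (carrier G)"
  by (auto simp: inj_on_def) (metis Units_eq Units_l_cancel inv_closed inv_inv)

lemma conj_eq_iff_mult_eq:
  assumes "x \<in> carrier G" "g \<in> carrier G" "h \<in> carrier G"
  shows "inv x \<otimes> g \<otimes> x = h \<longleftrightarrow> g \<otimes> x = x \<otimes> h"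
proof -
  have "inv x \<otimes> g \<otimes> x = inv x \<otimes> (g \<otimes> x)" using assms by (simp add: m_assoc)
  then show ?thesis using inv_solve_left'[of h x "g \<otimes> x"] assms by auto
qed

lemma inv_mult_eq_mult_inv_iff:
  assumes "x \<in> carrier G" "g \<in> carrier G" "h \<in> carrier G"
  shows "inv x \<otimes> g = h \<otimes> inv x \<longleftrightarrow> g \<otimes> x = x \<otimes> h"
  using inv_solve_right[of "inv x \<otimes> g" h x] conj_eq_iff_mult_eq assms by auto

lemma centr_subgroup:
  assumes g: "g \<in> carrier G"
  shows "subgroup (centr G g) G"
proof (rule subgroupI)
  show "centr G g \<subseteq> carrier G" "centr G g \<noteq> {}" unfolding centr_def using g by auto
next
  fix a assume "a \<in> centr G g"
  then show "inv a \<in> centr G g" using inv_commute_iff[of a g] g unfolding centr_def by auto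
next
  fix a b assume a: "a \<in> centr G g" and b: "b \<in> centr G g"
  have aC: "a \<in> carrier G" and bC: "b \<in> carrier G" using a b unfolding centr_def by auto
  have "(a \<otimes> b) \<otimes> g = a \<otimes> (g \<otimes> b)" using aC bC g b by (simp add: m_assoc centr_def)
  also have "\<dots> = g \<otimes> (a \<otimes> b)" using aC bC g a by (simp add: m_assoc[symmetric] centr_def)
  finally show "a \<otimes> b \<in> centr G g" using aC bC unfolding centr_def by auto
qed

end

locale finite_group = group +
  assumes finite_carrier [simp]: "finite (carrier G)"
begin

abbreviation N :: nat where "N \<equiv> card (carrier G)"

lemma carrier_not_empty [simp]: "carrier G \<noteq> {}"
  using one_closed by blast

lemma N_pos: "N > 0"
  by (simp add: card_gt_0_iff)

definition centr_size :: "'a \<Rightarrow> nat" where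
  "centr_size g = card (centr G g)"

definition conj_count :: "'a \<Rightarrow> 'a \<Rightarrow> nat" where
  "conj_count g h = card {x \<in> carrier G. g \<otimes> x = x \<otimes> h}"

lemma centr_size_le: "centr_size g \<le> N"
  unfolding centr_size_def centr_def by (rule card_mono) auto

lemma conj_count_le: "conj_count g h \<le> N"
  unfolding conj_count_def by (rule card_mono) auto

lemma centr_size_pos: "g \<in> carrier G \<Longrightarrow> centr_size g > 0"
  unfolding centr_size_def using subgroup.finite_imp_card_positive[OF centr_subgroup] by simp

lemma centr_size_one: "centr_size \<one> = N"
proof -
  have "{g\<in>carrier G. g \<otimes> \<one> = \<one> \<otimes> g} = carrier G" by auto
  then show ?thesis unfolding centr_size_def centr_def by simp
qed

lemma card_inv_mult_eq_conj_count:
  assumes "g \<in> carrier G" "h \<in> carrier G"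
  shows "card {x\<in>carrier G. inv x \<otimes> g = h \<otimes> inv x} = conj_count g h"
  unfolding conj_count_def using inv_mult_eq_mult_inv_iff assms
  by (intro arg_cong[where f=card]) auto

lemma card_mult_inv_eq_conj_count:
  assumes "g \<in> carrier G" "h \<in> carrier G"
  shows "card {x\<in>carrier G. g \<otimes> inv x = inv x \<otimes> h} = conj_count g h"
proof -
  have "bij_betw (\<lambda>x. inv x) {x\<in>carrier G. g \<otimes> x = x \<otimes> h} {x\<in>carrier G. g \<otimes> inv x = inv x \<otimes> h}"
    by (rule bij_betwI[where g="\<lambda>x. inv x"]) auto
  then show ?thesis unfolding conj_count_def by (simp add: bij_betw_same_card)
qed

lemma conj_count_pos_obtain:
  assumes "conj_count g h > 0"
  obtains x0 where "x0 \<in> carrier G" "g \<otimes> x0 = x0 \<otimes> h"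
proof -
  have "{x\<in>carrier G. g \<otimes> x = x \<otimes> h} \<noteq> {}"
    using assms unfolding conj_count_def by (metis card.empty less_irrefl)
  then show ?thesis using that by blast
qed

lemma centr_size_le_conj_count:
  assumes g: "g \<in> carrier G" and h: "h \<in> carrier G" and pos: "conj_count g h > 0"
  shows "centr_size g \<le> conj_count g h"
proof -
  obtain x0 where x0: "x0 \<in> carrier G" "g \<otimes> x0 = x0 \<otimes> h" using conj_count_pos_obtain[OF pos] .
  have sub: "(\<lambda>z. z \<otimes> x0) ` centr G g \<subseteq> {x\<in>carrier G. g \<otimes> x = x \<otimes> h}"
  proof
    fix y assume "y \<in> (\<lambda>z. z \<otimes> x0) ` centr G g"
    then obtain z where z: "z \<in> carrier G" "z \<otimes> g = g \<otimes> z" "y = z \<otimes> x0" unfolding centr_def by auto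
    have "g \<otimes> (z \<otimes> x0) = z \<otimes> (g \<otimes> x0)" using z x0(1) g by (simp add: m_assoc[symmetric])
    also have "\<dots> = (z \<otimes> x0) \<otimes> h" using z(1) x0 h by (simp add: m_assoc)
    finally show "y \<in> {x\<in>carrier G. g \<otimes> x = x \<otimes> h}" using z x0 by auto
  qed
  have inj: "inj_on (\<lambda>z. z \<otimes> x0) (centr G g)"
    using x0 unfolding centr_def by (auto simp: inj_on_def)
  show ?thesis
    unfolding centr_size_def conj_count_def by (rule card_inj_on_le[OF inj sub]) simp
qed

lemma conj_count_le_centr_size:
  assumes g: "g \<in> carrier G" and h: "h \<in> carrier G" and pos: "conj_count g h > 0"
  shows "conj_count g h \<le> centr_size h"
proof -
  obtain x0 where x0: "x0 \<in> carrier G" "g \<otimes> x0 = x0 \<otimes> h" using conj_count_pos_obtain[OF pos] .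
  have gx0: "inv x0 \<otimes> g = h \<otimes> inv x0" using x0 g h inv_mult_eq_mult_inv_iff by blast
  have sub: "(\<lambda>x. inv x0 \<otimes> x) ` {x\<in>carrier G. g \<otimes> x = x \<otimes> h} \<subseteq> centr G h"
  proof
    fix y assume "y \<in> (\<lambda>x. inv x0 \<otimes> x) ` {x\<in>carrier G. g \<otimes> x = x \<otimes> h}"
    then obtain x where x: "x \<in> carrier G" "g \<otimes> x = x \<otimes> h" "y = inv x0 \<otimes> x" by auto
    have "y \<otimes> h = (inv x0 \<otimes> g) \<otimes> x" using x x0 g h by (simp add: m_assoc)
    also have "\<dots> = h \<otimes> y" using gx0 x x0 h by (simp add: m_assoc)
    finally show "y \<in> centr G h" unfolding centr_def using x x0 by auto
  qed
  have inj: "inj_on (\<lambda>x. inv x0 \<otimes> x) {x\<in>carrier G. g \<otimes> x = x \<otimes> h}"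
    using x0 by (auto simp: inj_on_def)
  show ?thesis unfolding centr_size_def conj_count_def
    by (rule card_inj_on_le[OF inj sub]) (auto simp: centr_def)
qed

lemma conj_count_pos_sym:
  assumes g: "g \<in> carrier G" and h: "h \<in> carrier G" and pos: "conj_count g h > 0"
  shows "conj_count h g > 0"
proof -
  obtain x0 where x0: "x0 \<in> carrier G" "g \<otimes> x0 = x0 \<otimes> h" using conj_count_pos_obtain[OF pos] .
  then have "h \<otimes> inv x0 = inv x0 \<otimes> g"
    using g h by (metis inv_closed inv_inv inv_mult_eq_mult_inv_iff)
  then have "inv x0 \<in> {x\<in>carrier G. h \<otimes> x = x \<otimes> g}" using x0 by auto
  then show ?thesis unfolding conj_count_def by (auto simp: card_gt_0_iff)
qed

lemma conj_count_pos_centr_size: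
  assumes g: "g \<in> carrier G" and h: "h \<in> carrier G" and pos: "conj_count g h > 0"
  shows "centr_size h = centr_size g" "conj_count g h = centr_size g"
proof -
  have pos': "conj_count h g > 0" by (rule conj_count_pos_sym[OF g h pos])
  show "centr_size h = centr_size g"
    using centr_size_le_conj_count[OF g h pos] conj_count_le_centr_size[OF g h pos]
      centr_size_le_conj_count[OF h g pos'] conj_count_le_centr_size[OF h g pos'] by simp
  then show "conj_count g h = centr_size g"
    using centr_size_le_conj_count[OF g h pos] conj_count_le_centr_size[OF g h pos] by simp
qed

lemma card_conjugates_mult_centr_size_le:
  assumes g: "g \<in> carrier G"
  shows "card {h\<in>carrier G. conj_count g h > 0} * centr_size g \<le> N"
proof -
  define \<phi> where "\<phi> x = inv x \<otimes> g \<otimes> x" for x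
  have sub: "\<phi> ` carrier G \<subseteq> carrier G" unfolding \<phi>_def using g by auto
  have fib: "card {x\<in>carrier G. \<phi> x = h} = conj_count g h" if "h \<in> carrier G" for h
    unfolding conj_count_def \<phi>_def using conj_eq_iff_mult_eq g that by (intro arg_cong[where f=card]) auto
  have "(\<Sum>h\<in>{h\<in>carrier G. conj_count g h > 0}. centr_size g)
      \<le> (\<Sum>h\<in>{h\<in>carrier G. conj_count g h > 0}. card {x\<in>carrier G. \<phi> x = h})"
    by (rule sum_mono) (use centr_size_le_conj_count g fib in auto)
  also have "\<dots> \<le> (\<Sum>h\<in>carrier G. card {x\<in>carrier G. \<phi> x = h})"
    by (rule sum_mono2) auto
  also have "\<dots> = (\<Sum>h\<in>carrier G. \<Sum>x\<in>{x\<in>carrier G. \<phi> x = h}. (1::nat))"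
    by (simp only: card_eq_sum)
  also have "\<dots> = (\<Sum>x\<in>carrier G. 1)" by (rule sum.group[OF finite_carrier finite_carrier sub])
  finally show ?thesis by simp
qed

lemma centr_size_le_half:
  assumes g: "g \<in> carrier G" and h: "h \<in> carrier G" and gh: "h \<noteq> g" and pos: "conj_count g h > 0"
  shows "2 * centr_size g \<le> N"
proof -
  obtain x0 where x0: "x0 \<in> carrier G" "g \<otimes> x0 = x0 \<otimes> h" using conj_count_pos_obtain[OF pos] .
  have "x0 \<notin> centr G g"
  proof
    assume "x0 \<in> centr G g"
    then have "x0 \<otimes> g = x0 \<otimes> h" using x0 unfolding centr_def by auto
    then show False using x0(1) g h gh by simp
  qed
  moreover have "centr G g \<subseteq> carrier G" by (auto simp: centr_def)
  ultimately have "centr G g \<subset> carrier G" using x0(1) by blast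
  then have lt: "centr_size g < N" unfolding centr_size_def by (simp add: psubset_card_mono)
  have eq: "card (rcosets (centr G g)) * centr_size g = N"
    using lagrange[OF centr_subgroup[OF g]] unfolding centr_size_def order_def .
  then have "card (rcosets (centr G g)) \<noteq> 0" "card (rcosets (centr G g)) \<noteq> 1"
    using N_pos lt by (metis mult_0 less_irrefl, auto)
  then have "2 * centr_size g \<le> card (rcosets (centr G g)) * centr_size g"
    by (intro mult_le_mono1) linarith
  then show ?thesis using eq by simp
qed

section \<open>The exponent \<open>\<Theta>\<close>\<close>

definition centr_exp_sum :: "real \<Rightarrow> real" where
  "centr_exp_sum \<xi> = (\<Sum>x\<in>carrier G. exp (\<xi> * ln N * real (centr_size x) / N))"

text \<open>\<open>Theta G\<close> is the zero of this function in \<open>[1/2, 1]\<close>.\<close>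
definition Theta_gap :: "real \<Rightarrow> real" where
  "Theta_gap \<xi> = 2 * \<xi> * ln N - ln (centr_exp_sum \<xi>)"

lemma centr_exp_sum_pos: "centr_exp_sum \<xi> > 0"
  unfolding centr_exp_sum_def by (rule sum_pos) auto

lemma centr_size_div_le_1: "real (centr_size x) / N \<le> 1"
  using centr_size_le[of x] N_pos by simp

lemma Theta_gap_strict_mono:
  assumes "N \<ge> 2" "\<xi>1 < \<xi>2"
  shows "Theta_gap \<xi>1 < Theta_gap \<xi>2"
proof -
  define L where "L = ln (real N)"
  have L0: "L > 0" unfolding L_def using assms by simp
  have "centr_exp_sum \<xi>2 \<le> centr_exp_sum \<xi>1 * exp ((\<xi>2 - \<xi>1) * L)"
    unfolding centr_exp_sum_def sum_distrib_right L_def[symmetric]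
  proof (rule sum_mono)
    fix x
    have "\<xi>2 * L * real (centr_size x) / N
        = \<xi>1 * L * real (centr_size x) / N + (\<xi>2 - \<xi>1) * L * (real (centr_size x) / N)"
      by (simp add: algebra_simps diff_divide_distrib)
    also have "\<dots> \<le> \<xi>1 * L * real (centr_size x) / N + (\<xi>2 - \<xi>1) * L"
      using assms L0 centr_size_div_le_1[of x] by (intro add_left_mono mult_right_le_one_le) auto
    finally show "exp (\<xi>2 * L * real (centr_size x) / N)
        \<le> exp (\<xi>1 * L * real (centr_size x) / N) * exp ((\<xi>2 - \<xi>1) * L)"
      by (simp add: exp_add[symmetric])
  qed
  then have "ln (centr_exp_sum \<xi>2) \<le> ln (centr_exp_sum \<xi>1 * exp ((\<xi>2 - \<xi>1) * L))"
    using centr_exp_sum_pos by (subst ln_le_cancel_iff) auto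
  also have "\<dots> = ln (centr_exp_sum \<xi>1) + (\<xi>2 - \<xi>1) * L"
    using centr_exp_sum_pos[of \<xi>1] by (simp add: ln_mult)
  finally have "ln (centr_exp_sum \<xi>2) \<le> ln (centr_exp_sum \<xi>1) + (\<xi>2 - \<xi>1) * L" .
  moreover have "(\<xi>2 - \<xi>1) * L > 0" using assms L0 by simp
  moreover have "2 * \<xi>2 * L - 2 * \<xi>1 * L = 2 * ((\<xi>2 - \<xi>1) * L)" by (simp add: algebra_simps)
  ultimately show ?thesis unfolding Theta_gap_def L_def[symmetric] by linarith
qed

lemma Theta_gap_half_neg:
  assumes "N \<ge> 2"
  shows "Theta_gap (1/2) < 0"
proof -
  have L0: "ln N > 0" using assms by simp
  have "(\<Sum>x\<in>carrier G. 1) < centr_exp_sum (1/2)"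
    unfolding centr_exp_sum_def
  proof (rule sum_strict_mono_ex1)
    show "\<forall>x\<in>carrier G. 1 \<le> exp (1/2 * ln N * real (centr_size x) / N)"
      using L0 by auto
    show "\<exists>x\<in>carrier G. 1 < exp (1/2 * ln N * real (centr_size x) / N)"
      using L0 N_pos centr_size_one by (intro bexI[of _ \<one>]) auto
  qed auto
  then have "ln N < ln (centr_exp_sum (1/2))" using N_pos by (simp add: ln_less_cancel_iff)
  then show ?thesis unfolding Theta_gap_def by simp
qed

lemma Theta_gap_one_nonneg: "Theta_gap 1 \<ge> 0"
proof -
  have "centr_exp_sum 1 \<le> (\<Sum>x\<in>carrier G. exp (ln N))"
    unfolding centr_exp_sum_def
  proof (intro sum_mono)
    fix x
    have "ln N * (real (centr_size x) / N) \<le> ln N * 1"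
      using N_pos centr_size_div_le_1[of x] by (intro mult_left_mono) auto
    then show "exp (1 * ln N * real (centr_size x) / N) \<le> exp (ln N)" by simp
  qed
  also have "\<dots> = real N * real N" using N_pos by simp
  finally have "ln (centr_exp_sum 1) \<le> ln (real N * real N)"
    using centr_exp_sum_pos[of 1] by (subst ln_le_cancel_iff) auto
  also have "\<dots> = 2 * ln N" using N_pos by (simp add: ln_mult)
  finally show ?thesis unfolding Theta_gap_def by simp
qed

lemma Theta_gap_Theta:
  assumes "N \<ge> 2"
  shows "Theta G \<in> {1/2..1}" "Theta_gap (Theta G) = 0"
proof -
  have "isCont Theta_gap x" for x
    unfolding Theta_gap_def centr_exp_sum_def
    using centr_exp_sum_pos[of x, unfolded centr_exp_sum_def] by (intro continuous_intros) auto
  then obtain \<xi>0 where \<xi>0: "\<xi>0 \<in> {1/2..1}" "Theta_gap \<xi>0 = 0"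
    using IVT[of Theta_gap "1/2" 0 1] Theta_gap_half_neg[OF assms] Theta_gap_one_nonneg by force
  have unique: "\<xi> = \<xi>0" if "\<xi> \<in> {1/2..1} \<and> Theta_gap \<xi> = 0" for \<xi>
    using Theta_gap_strict_mono[OF assms, of \<xi> \<xi>0] Theta_gap_strict_mono[OF assms, of \<xi>0 \<xi>] that \<xi>0
    by (cases "\<xi> < \<xi>0"; cases "\<xi>0 < \<xi>") auto
  have "Theta G = (THE \<xi>. \<xi> \<in> {1/2..1} \<and> Theta_gap \<xi> = 0)"
    unfolding Theta_def Theta_gap_def centr_exp_sum_def centr_size_def Let_def by (simp add: eq_diff_eq)
  also have "\<dots> = \<xi>0" using \<xi>0 unique by (intro the_equality) auto
  finally show "Theta G \<in> {1/2..1}" "Theta_gap (Theta G) = 0" using \<xi>0 by auto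
qed

lemma Theta_bounds:
  assumes "N \<ge> 2"
  shows "1/2 \<le> Theta G" "Theta G \<le> 1"
  using Theta_gap_Theta(1)[OF assms] by auto

lemma sum_exp_Theta_eq_1:
  assumes "N \<ge> 2"
  shows "(\<Sum>g\<in>carrier G. exp (- Theta G * ln N * (2 - centr_size g / N))) = 1"
proof -
  define \<xi> where "\<xi> = Theta G"
  have "centr_exp_sum \<xi> = exp (2 * \<xi> * ln N)"
    using Theta_gap_Theta(2)[OF assms] centr_exp_sum_pos[of \<xi>] unfolding Theta_gap_def \<xi>_def
    by (metis eq_iff_diff_eq_0 exp_ln)
  have "(\<Sum>g\<in>carrier G. exp (- \<xi> * ln N * (2 - centr_size g / N))) = exp (- 2 * \<xi> * ln N) * centr_exp_sum \<xi>"
    unfolding centr_exp_sum_def sum_distrib_left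
    by (intro sum.cong refl) (simp add: exp_add[symmetric] algebra_simps)
  also have "\<dots> = 1" using \<open>centr_exp_sum \<xi> = _\<close> by (simp add: exp_add[symmetric])
  finally show ?thesis unfolding \<xi>_def .
qed

end

section \<open>Uncovered elements\<close>

declare sum_of_bool_eq [simp del] sum_of_bool_mult_eq [simp del] sum_mult_of_bool_eq [simp del]

context finite_group
begin

definition tuples :: "nat \<Rightarrow> (nat \<Rightarrow> 'a) set" where
  "tuples k = {..<k} \<rightarrow>\<^sub>E carrier G"

lemma finite_tuples [simp]: "finite (tuples k)"
  unfolding tuples_def by (auto intro: finite_PiE)

lemma tuples_not_empty: "tuples k \<noteq> {}"
  unfolding tuples_def by (simp add: PiE_eq_empty_iff)

lemma card_tuples: "card (tuples k) = N ^ k"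
  unfolding tuples_def by (simp add: card_PiE)

lemma N_power_eq_card_tuples_sq: "real N ^ (2*k) = real (card (tuples k)) * real (card (tuples k))"
  by (simp add: card_tuples power_mult power2_eq_square power_mult_distrib)

lemma tuples_in_carrier: "a \<in> tuples k \<Longrightarrow> j < k \<Longrightarrow> a j \<in> carrier G"
  unfolding tuples_def by auto

lemma tuples_image_subset: "a \<in> tuples k \<Longrightarrow> a ` {..<k} \<subseteq> carrier G"
  using tuples_in_carrier by auto

lemma sum_tuples_avoiding:
  assumes "S \<subseteq> carrier G"
  shows "(\<Sum>b\<in>tuples k. of_bool (\<forall>j<k. b j \<notin> S) :: real) = (real N - card S) ^ k"
proof -
  have "tuples k \<inter> {b. \<forall>j<k. b j \<notin> S} = {..<k} \<rightarrow>\<^sub>E (carrier G - S)"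
    unfolding tuples_def by auto
  moreover have "card ({..<k} \<rightarrow>\<^sub>E (carrier G - S)) = (N - card S) ^ k"
    by (simp add: card_PiE card_Diff_subset assms finite_subset[OF assms finite_carrier])
  moreover have "card S \<le> N" using card_mono[OF finite_carrier assms] .
  ultimately show ?thesis by (simp add: of_nat_diff sum_of_bool_eq)
qed

text \<open>The elements \<open>b\<close> with \<open>g \<in> Ab \<union> bA\<close>.\<close>
definition coverers :: "'a \<Rightarrow> 'a set \<Rightarrow> 'a set" where
  "coverers g A = (\<lambda>x. inv x \<otimes> g) ` A \<union> (\<lambda>x. g \<otimes> inv x) ` A"

lemma coverers_subset: "g \<in> carrier G \<Longrightarrow> A \<subseteq> carrier G \<Longrightarrow> coverers g A \<subseteq> carrier G"
  unfolding coverers_def by auto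

lemma card_coverers_le:
  "g \<in> carrier G \<Longrightarrow> A \<subseteq> carrier G \<Longrightarrow> card (coverers g A) \<le> N"
  by (rule card_mono[OF finite_carrier coverers_subset])

lemma card_coverers_Un_le:
  "g \<in> carrier G \<Longrightarrow> h \<in> carrier G \<Longrightarrow> A \<subseteq> carrier G \<Longrightarrow> card (coverers g A \<union> coverers h A) \<le> N"
  by (rule card_mono[OF finite_carrier]) (use coverers_subset in blast)

definition uncovered :: "nat \<Rightarrow> (nat \<Rightarrow> 'a) \<Rightarrow> (nat \<Rightarrow> 'a) \<Rightarrow> 'a \<Rightarrow> bool" where
  "uncovered k a b g \<longleftrightarrow>
     g \<notin> setprod G (a ` {..<k}) (b ` {..<k}) \<union> setprod G (b ` {..<k}) (a ` {..<k})"

lemma setprod_subset: "A \<subseteq> carrier G \<Longrightarrow> B \<subseteq> carrier G \<Longrightarrow> setprod G A B \<subseteq> carrier G"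
  unfolding setprod_def by auto

lemma covers_iff_none_uncovered:
  assumes "a \<in> tuples k" "b \<in> tuples k"
  shows "setprod G (a ` {..<k}) (b ` {..<k}) \<union> setprod G (b ` {..<k}) (a ` {..<k}) = carrier G
     \<longleftrightarrow> (\<forall>g\<in>carrier G. \<not> uncovered k a b g)"
  using setprod_subset[OF tuples_image_subset[OF assms(1)] tuples_image_subset[OF assms(2)]]
     setprod_subset[OF tuples_image_subset[OF assms(2)] tuples_image_subset[OF assms(1)]]
  unfolding uncovered_def by blast

lemma uncovered_iff_avoids_coverers:
  assumes "a \<in> tuples k" "b \<in> tuples k" "g \<in> carrier G"
  shows "uncovered k a b g \<longleftrightarrow> (\<forall>j<k. b j \<notin> coverers g (a ` {..<k}))"
proof -
  have "(\<exists>j<k. b j \<in> coverers g (a ` {..<k})) \<longleftrightarrow> \<not> uncovered k a b g"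
  proof
    assume "\<exists>j<k. b j \<in> coverers g (a ` {..<k})"
    then obtain j i where ji: "j < k" "i < k" "b j = inv (a i) \<otimes> g \<or> b j = g \<otimes> inv (a i)"
      unfolding coverers_def by auto
    have aC: "a i \<in> carrier G" and bC: "b j \<in> carrier G" using tuples_in_carrier assms ji by auto
    from ji(3) have "g = a i \<otimes> b j \<or> g = b j \<otimes> a i"
      using inv_solve_left[OF bC aC assms(3)] inv_solve_right[OF bC assms(3) aC] by blast
    then show "\<not> uncovered k a b g" unfolding uncovered_def setprod_def using ji by blast
  next
    assume "\<not> uncovered k a b g"
    then obtain i j where ji: "i < k" "j < k" "g = a i \<otimes> b j \<or> g = b j \<otimes> a i"
      unfolding uncovered_def setprod_def by blast
    have aC: "a i \<in> carrier G" and bC: "b j \<in> carrier G" using tuples_in_carrier assms ji by auto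
    from ji(3) have "b j = inv (a i) \<otimes> g \<or> b j = g \<otimes> inv (a i)"
      using inv_solve_left[OF bC aC assms(3)] inv_solve_right[OF bC assms(3) aC] by blast
    then show "\<exists>j<k. b j \<in> coverers g (a ` {..<k})" unfolding coverers_def using ji by blast
  qed
  then show ?thesis by blast
qed

lemma Pcov_eq_sum:
  "Pcov G k = (\<Sum>a\<in>tuples k. \<Sum>b\<in>tuples k. of_bool (\<forall>g\<in>carrier G. \<not> uncovered k a b g)) / real N ^ (2*k)"
proof -
  have "Pcov G k = (\<Sum>a\<in>tuples k. \<Sum>b\<in>tuples k. of_bool (setprod G (a ` {..<k}) (b ` {..<k})
      \<union> setprod G (b ` {..<k}) (a ` {..<k}) = carrier G)) / real N ^ (2*k)"
    unfolding Pcov_def tuples_def[symmetric] by (subst card_pairs_eq_sum_sum) auto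
  also have "\<dots> = (\<Sum>a\<in>tuples k. \<Sum>b\<in>tuples k. of_bool (\<forall>g\<in>carrier G. \<not> uncovered k a b g)) / real N ^ (2*k)"
    by (intro arg_cong2[where f="(/)"] sum.cong refl) (simp add: covers_iff_none_uncovered)
  finally show ?thesis .
qed

lemma Pcov_nonneg: "Pcov G k \<ge> 0"
  unfolding Pcov_eq_sum by (simp add: sum_nonneg)

lemma Pcov_le_1: "Pcov G k \<le> 1"
proof -
  have "(\<Sum>a\<in>tuples k. \<Sum>b\<in>tuples k. of_bool (\<forall>g\<in>carrier G. \<not> uncovered k a b g) :: real)
      \<le> (\<Sum>a\<in>tuples k. \<Sum>b\<in>tuples k. 1)"
    by (intro sum_mono) auto
  also have "\<dots> = real N ^ (2*k)" by (simp add: N_power_eq_card_tuples_sq)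
  finally show ?thesis unfolding Pcov_eq_sum using N_pos by (simp add: divide_le_eq)
qed

lemma Pcov_0: "Pcov G 0 = 0"
proof -
  have "\<not> (\<forall>g\<in>carrier G. \<not> uncovered 0 a b g)" for a b
    using one_closed unfolding uncovered_def setprod_def by auto
  then have z: "of_bool (\<forall>g\<in>carrier G. \<not> uncovered 0 a b g) = (0::real)" for a b by simp
  show ?thesis unfolding Pcov_eq_sum z by simp
qed

definition prob_uncovered :: "nat \<Rightarrow> 'a \<Rightarrow> real" where
  "prob_uncovered k g =
     (\<Sum>a\<in>tuples k. \<Sum>b\<in>tuples k. of_bool (uncovered k a b g)) / real N ^ (2*k)"

definition prob_uncovered2 :: "nat \<Rightarrow> 'a \<Rightarrow> 'a \<Rightarrow> real" where
  "prob_uncovered2 k g h =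
     (\<Sum>a\<in>tuples k. \<Sum>b\<in>tuples k. of_bool (uncovered k a b g) * of_bool (uncovered k a b h)) / real N ^ (2*k)"

lemma prob_uncovered_nonneg: "prob_uncovered k g \<ge> 0"
  unfolding prob_uncovered_def by (simp add: sum_nonneg)

lemma prob_uncovered_eq:
  assumes g: "g \<in> carrier G"
  shows "prob_uncovered k g = (\<Sum>a\<in>tuples k. (real N - card (coverers g (a ` {..<k})))^k) / real N ^ (2*k)"
proof -
  have "(\<Sum>b\<in>tuples k. of_bool (uncovered k a b g) :: real) = (real N - card (coverers g (a ` {..<k}))) ^ k"
    if a: "a \<in> tuples k" for a
  proof -
    have "(\<Sum>b\<in>tuples k. of_bool (uncovered k a b g) :: real)
        = (\<Sum>b\<in>tuples k. of_bool (\<forall>j<k. b j \<notin> coverers g (a ` {..<k})))"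
      by (intro sum.cong refl) (simp add: uncovered_iff_avoids_coverers a g)
    also have "\<dots> = (real N - card (coverers g (a ` {..<k}))) ^ k"
      by (rule sum_tuples_avoiding[OF coverers_subset[OF g tuples_image_subset[OF a]]])
    finally show ?thesis .
  qed
  then show ?thesis unfolding prob_uncovered_def
    by (intro arg_cong2[where f="(/)"] sum.cong refl) simp
qed

lemma prob_uncovered2_eq:
  assumes g: "g \<in> carrier G" and h: "h \<in> carrier G"
  shows "prob_uncovered2 k g h
    = (\<Sum>a\<in>tuples k. (real N - card (coverers g (a ` {..<k}) \<union> coverers h (a ` {..<k})))^k) / real N ^ (2*k)"
proof -
  have "(\<Sum>b\<in>tuples k. of_bool (uncovered k a b g) * of_bool (uncovered k a b h) :: real)
      = (real N - card (coverers g (a ` {..<k}) \<union> coverers h (a ` {..<k}))) ^ k"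
    if a: "a \<in> tuples k" for a
  proof -
    have "(\<Sum>b\<in>tuples k. of_bool (uncovered k a b g) * of_bool (uncovered k a b h) :: real)
        = (\<Sum>b\<in>tuples k. of_bool (\<forall>j<k. b j \<notin> coverers g (a ` {..<k}) \<union> coverers h (a ` {..<k})))"
      by (intro sum.cong refl) (auto simp: uncovered_iff_avoids_coverers a g h)
    also have "\<dots> = (real N - card (coverers g (a ` {..<k}) \<union> coverers h (a ` {..<k}))) ^ k"
      by (rule sum_tuples_avoiding) (use coverers_subset[OF _ tuples_image_subset[OF a]] g h in auto)
    finally show ?thesis .
  qed
  then show ?thesis unfolding prob_uncovered2_def
    by (intro arg_cong2[where f="(/)"] sum.cong refl) simp
qed

end

section \<open>Exponential moments of \<open>|S\<^sub>g(A)|\<close>\<close>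

text \<open>
  Adding \<open>m\<close> points to \<open>S\<close> increases its size by \<open>m\<close> up to the collisions and hits \<open>Z\<close>;
  since \<open>Z \<le> M = m\<^sup>2 + m\<close>, convexity linearizes \<open>exp (t Z)\<close>, whose mean is then computable.
\<close>
lemma exp_card_Un_image_le:
  fixes h :: "nat \<Rightarrow> 'b" and t :: real
  assumes S: "finite S" and m: "m \<ge> 1" and t: "t \<ge> 0"
  defines "Z \<equiv> (\<Sum>(j, l)\<in>index_pairs m. of_bool (h j = h l)) + (\<Sum>j<m. of_bool (h j \<in> S) :: real)"
    and "M \<equiv> real (m*m+m)"
  shows "exp (- t * card (S \<union> h ` {..<m})) \<le> exp (- t * card S) * exp (- t*m) * (1 + Z * ((exp (t*M) - 1) / M))"
proof -
  have Mpos: "M > 0" unfolding M_def using m by (simp del: of_nat_add of_nat_mult)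
  have Z0: "0 \<le> Z" unfolding Z_def by (intro add_nonneg_nonneg sum_nonneg) auto
  have "(\<Sum>(j, l)\<in>index_pairs m. of_bool (h j = h l) :: real) \<le> card (index_pairs m)"
    using sum_mono[of "index_pairs m" "\<lambda>(j, l). of_bool (h j = h l) :: real" "\<lambda>_. 1"] by (simp add: split_beta)
  moreover have "(\<Sum>j<m. of_bool (h j \<in> S) :: real) \<le> m"
    using sum_mono[of "{..<m}" "\<lambda>j. of_bool (h j \<in> S) :: real" "\<lambda>_. 1"] by simp
  ultimately have ZM: "Z \<le> M"
    unfolding Z_def M_def using of_nat_mono[OF card_index_pairs_le[of m], where 'a=real] by simp
  have "exp (- t * card (S \<union> h ` {..<m})) \<le> exp (- t * (card S + m - Z))"
    using card_Un_image_ge[OF S, where h=h and m=m] t unfolding Z_def by (simp add: mult_left_mono)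
  also have "\<dots> = exp (- t * card S) * exp (- t*m) * exp (t * Z)"
    by (simp add: exp_add[symmetric] exp_diff algebra_simps)
  also have "\<dots> \<le> exp (- t * card S) * exp (- t*m) * (1 + Z * ((exp (t*M) - 1) / M))"
    using exp_le_chord[OF Z0 ZM Mpos t] by (intro mult_left_mono) (auto simp: mult.commute)
  finally show ?thesis .
qed

context finite_group
begin

lemma sum_collisions_and_hits_le:
  fixes f :: "nat \<Rightarrow> 'a \<Rightarrow> 'a" and s0 :: real
  assumes inj: "\<And>j. j < m \<Longrightarrow> inj_on (f j) (carrier G)" and S: "finite S" "real (card S) \<le> s0"
  shows "(\<Sum>y\<in>carrier G. (\<Sum>(j, l)\<in>index_pairs m. of_bool (f j y = f l y)) + (\<Sum>j<m. of_bool (f j y \<in> S) :: real))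
    \<le> (\<Sum>(j, l)\<in>index_pairs m. real (card {x\<in>carrier G. f j x = f l x})) + m * s0"
proof -
  have "(\<Sum>y\<in>carrier G. \<Sum>(j, l)\<in>index_pairs m. of_bool (f j y = f l y) :: real)
      = (\<Sum>(j, l)\<in>index_pairs m. \<Sum>y\<in>carrier G. of_bool (f j y = f l y))"
    unfolding case_prod_beta by (rule sum.swap)
  also have "\<dots> = (\<Sum>(j, l)\<in>index_pairs m. real (card {x\<in>carrier G. f j x = f l x}))"
    by (intro sum.cong refl) (clarsimp simp: sum_of_bool_eq Int_def)
  finally have collisions: "(\<Sum>y\<in>carrier G. \<Sum>(j, l)\<in>index_pairs m. of_bool (f j y = f l y) :: real)
      = (\<Sum>(j, l)\<in>index_pairs m. real (card {x\<in>carrier G. f j x = f l x}))" .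
  have "(\<Sum>y\<in>carrier G. \<Sum>j<m. of_bool (f j y \<in> S) :: real) = (\<Sum>j<m. real (card {y\<in>carrier G. f j y \<in> S}))"
    by (subst sum.swap) (simp add: sum_of_bool_eq Int_def)
  also have "\<dots> \<le> (\<Sum>j<m. s0)"
  proof (rule sum_mono)
    fix j assume "j \<in> {..<m}"
    then have "inj_on (f j) {y\<in>carrier G. f j y \<in> S}" using inj by (auto intro: inj_on_subset)
    then have "card {y\<in>carrier G. f j y \<in> S} \<le> card S" using S by (intro card_inj_on_le) auto
    then show "real (card {y\<in>carrier G. f j y \<in> S}) \<le> s0" using S(2) by linarith
  qed
  finally show ?thesis using collisions by (simp add: sum.distrib)
qed

lemma sum_exp_card_Un_le:
  fixes f :: "nat \<Rightarrow> 'a \<Rightarrow> 'a" and t s0 :: real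
  assumes inj: "\<And>j. j < m \<Longrightarrow> inj_on (f j) (carrier G)"
    and m: "m \<ge> 1" and t: "t \<ge> 0" and S: "finite S" "real (card S) \<le> s0"
  shows "(\<Sum>y\<in>carrier G. exp (- t * card (S \<union> (\<lambda>j. f j y) ` {..<m})))
     \<le> exp (- t * card S) * N * exp (- t*m + (exp (t * real (m*m+m)) - 1) / real (m*m+m) *
          ((\<Sum>(j, l)\<in>index_pairs m. real (card {x\<in>carrier G. f j x = f l x})) / N + m * s0 / N))"
proof -
  define M where "M = real (m*m+m)"
  define \<gamma> where "\<gamma> = (exp (t*M) - 1) / M"
  define Nc where "Nc = (\<Sum>(j, l)\<in>index_pairs m. real (card {x\<in>carrier G. f j x = f l x}))"
  define Z where "Z y = (\<Sum>(j, l)\<in>index_pairs m. of_bool (f j y = f l y)) + (\<Sum>j<m. of_bool (f j y \<in> S) :: real)" for y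
  have \<gamma>0: "\<gamma> \<ge> 0" unfolding \<gamma>_def M_def using t by simp
  have point: "exp (- t * card (S \<union> (\<lambda>j. f j y) ` {..<m})) \<le> exp (- t * card S) * exp (- t*m) * (1 + Z y * \<gamma>)" for y
    using exp_card_Un_image_le[OF S(1) m t, where h="\<lambda>j. f j y"] unfolding Z_def \<gamma>_def M_def .
  have sumZ: "(\<Sum>y\<in>carrier G. Z y) \<le> Nc + m * s0"
    unfolding Z_def Nc_def by (rule sum_collisions_and_hits_le[OF inj S])
  have "(\<Sum>y\<in>carrier G. exp (- t * card (S \<union> (\<lambda>j. f j y) ` {..<m})))
      \<le> (\<Sum>y\<in>carrier G. exp (- t * card S) * exp (- t*m) * (1 + Z y * \<gamma>))"
    by (rule sum_mono) (rule point)
  also have "\<dots> = exp (- t * card S) * exp (- t*m) * (N + \<gamma> * (\<Sum>y\<in>carrier G. Z y))"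
    by (simp add: sum.distrib sum_distrib_left sum_distrib_right algebra_simps)
  also have "\<dots> \<le> exp (- t * card S) * exp (- t*m) * (N + \<gamma> * (Nc + m * s0))"
    using sumZ \<gamma>0 by (intro mult_left_mono add_left_mono) auto
  also have "\<dots> = exp (- t * card S) * N * (exp (- t*m) * (1 + \<gamma> * (Nc/N + m * s0/N)))"
    by (simp add: field_simps)
  also have "\<dots> \<le> exp (- t * card S) * N * (exp (- t*m) * exp (\<gamma> * (Nc/N + m * s0/N)))"
    by (intro mult_left_mono) auto
  also have "\<dots> = exp (- t * card S) * N * exp (- t*m + \<gamma> * (Nc/N + m * s0/N))"
    by (simp only: exp_add)
  finally show ?thesis unfolding \<gamma>_def M_def Nc_def .
qed

lemma sum_exp_card_UN_le:
  fixes f :: "nat \<Rightarrow> 'a \<Rightarrow> 'a" and K :: nat and t :: real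
  assumes inj: "\<And>j. j < m \<Longrightarrow> inj_on (f j) (carrier G)" and m: "m \<ge> 1" and t: "t \<ge> 0"
    and "k \<le> K"
  defines "W \<equiv> - t*m + (exp (t * real (m*m+m)) - 1) / real (m*m+m) *
          ((\<Sum>(j, l)\<in>index_pairs m. real (card {x\<in>carrier G. f j x = f l x})) / N + m * (m*K) / N)"
  shows "(\<Sum>a\<in>tuples k. exp (- t * card (\<Union>i<k. (\<lambda>j. f j (a i)) ` {..<m}))) \<le> real N ^ k * exp (k * W)"
  using \<open>k \<le> K\<close>
proof (induction k)
  case 0
  then show ?case by (simp add: tuples_def)
next
  case (Suc k)
  define T where "T y = (\<lambda>j. f j y) ` {..<m}" for y
  define S where "S a = (\<Union>i<k. T (a i))" for a
  have tuples_Suc: "tuples (Suc k) = (\<lambda>(y, g). g(k := y)) ` (carrier G \<times> tuples k)"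
    unfolding tuples_def lessThan_Suc by (rule PiE_insert_eq)
  have inj2: "inj_on (\<lambda>(y, g). g(k := y)) (carrier G \<times> tuples k)"
    unfolding tuples_def by (rule inj_combinator) simp
  have U: "(\<Union>i<Suc k. T ((g(k := y)) i)) = S g \<union> T y" for g y
    unfolding S_def lessThan_Suc by auto
  have cardS: "real (card (S g)) \<le> real (m*K)" for g
  proof -
    have "card (S g) \<le> (\<Sum>i<k. card (T (g i)))" unfolding S_def by (rule card_UN_le) simp
    also have "\<dots> \<le> (\<Sum>i<k. m)" unfolding T_def by (intro sum_mono) (metis card_image_le card_lessThan finite_lessThan)
    also have "\<dots> \<le> m*K" using Suc.prems by simp
    finally show ?thesis by linarith
  qed
  have "(\<Sum>a\<in>tuples (Suc k). exp (- t * card (\<Union>i<Suc k. T (a i))))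
      = (\<Sum>(y,g)\<in>carrier G \<times> tuples k. exp (- t * card (S g \<union> T y)))"
    unfolding tuples_Suc by (subst sum.reindex[OF inj2]) (simp add: case_prod_beta U del: fun_upd_apply)
  also have "\<dots> = (\<Sum>g\<in>tuples k. \<Sum>y\<in>carrier G. exp (- t * card (S g \<union> T y)))"
    by (simp add: sum.cartesian_product[symmetric] sum.swap[of _ "carrier G"])
  also have "\<dots> \<le> (\<Sum>g\<in>tuples k. exp (- t * card (S g)) * N * exp W)"
  proof (rule sum_mono)
    fix g
    have "finite (S g)" unfolding S_def T_def by auto
    from sum_exp_card_Un_le[OF inj m t this cardS[of g]]
    show "(\<Sum>y\<in>carrier G. exp (- t * card (S g \<union> T y))) \<le> exp (- t * card (S g)) * N * exp W"
      unfolding W_def T_def by (simp add: mult.assoc)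
  qed
  also have "\<dots> = (\<Sum>g\<in>tuples k. exp (- t * card (S g))) * (N * exp W)"
    by (simp add: sum_distrib_right mult.assoc)
  also have "\<dots> \<le> (real N ^ k * exp (k * W)) * (N * exp W)"
    using Suc by (intro mult_right_mono) (auto simp: S_def T_def)
  also have "\<dots> = real N ^ Suc k * exp (Suc k * W)"
    by (simp add: exp_add[symmetric] algebra_simps)
  finally show ?case unfolding T_def .
qed

lemma sum_exp_card_coverers_le:
  fixes t :: real
  assumes g: "g \<in> carrier G" and t: "t \<ge> 0"
  shows "(\<Sum>a\<in>tuples k. exp (- t * card (coverers g (a ` {..<k}))))
     \<le> real N ^ k * exp (k * (- 2*t + (exp (t*6) - 1)/6 * (centr_size g/N + 4*k/N)))"
proof -
  define f where "f (j::nat) x = (if j = 0 then inv x \<otimes> g else g \<otimes> inv x)" for j x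
  have inj: "inj_on (f j) (carrier G)" if "j < 2" for j
    using inj_on_inv_mult[OF g] inj_on_mult_inv[OF g] unfolding f_def by (cases "j = 0") auto
  have U: "(\<Union>i<k. (\<lambda>j. f j (a i)) ` {..<2}) = coverers g (a ` {..<k})" for a
    unfolding coverers_def f_def by (auto simp: lessThan_Suc numeral_eq_Suc)
  have Nc: "(\<Sum>(j, l)\<in>index_pairs 2. real (card {x\<in>carrier G. f j x = f l x})) = centr_size g"
    unfolding index_pairs_2 centr_size_def centr_def f_def using inv_commute_iff g by (simp cong: conj_cong)
  from sum_exp_card_UN_le[where m=2 and K=k and k=k and f=f, OF inj _ t] show ?thesis
    unfolding U Nc by (simp add: algebra_simps)
qed

lemma sum_exp_card_coverers_Un_le:
  fixes t :: real
  assumes g: "g \<in> carrier G" and h: "h \<in> carrier G" and gh: "g \<noteq> h" and t: "t \<ge> 0"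
  shows "(\<Sum>a\<in>tuples k. exp (- t * card (coverers g (a ` {..<k}) \<union> coverers h (a ` {..<k}))))
     \<le> real N ^ k * exp (k * (- 4*t + (exp (t*20) - 1)/20 *
          ((centr_size g + centr_size h + 2 * conj_count g h)/N + 16*k/N)))"
proof -
  define f where "f (j::nat) x = [inv x \<otimes> g, g \<otimes> inv x, inv x \<otimes> h, h \<otimes> inv x] ! j" for j x
  have inj: "inj_on (f j) (carrier G)" if "j < 4" for j
    using inj_on_inv_mult[OF g] inj_on_mult_inv[OF g] inj_on_inv_mult[OF h] inj_on_mult_inv[OF h] that
    unfolding f_def by (auto simp: less_Suc_eq numeral_eq_Suc)
  have U: "(\<Union>i<k. (\<lambda>j. f j (a i)) ` {..<4}) = coverers g (a ` {..<k}) \<union> coverers h (a ` {..<k})" for a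
    unfolding coverers_def f_def by (auto simp: lessThan_Suc numeral_eq_Suc)
  have "{x\<in>carrier G. inv x \<otimes> g = inv x \<otimes> h} = {}" "{x\<in>carrier G. g \<otimes> inv x = h \<otimes> inv x} = {}"
    using gh g h by auto
  then have Nc: "(\<Sum>(j, l)\<in>index_pairs 4. real (card {x\<in>carrier G. f j x = f l x}))
      = centr_size g + centr_size h + 2 * conj_count g h"
    unfolding index_pairs_4 centr_size_def centr_def f_def
    using inv_commute_iff card_inv_mult_eq_conj_count[OF g h] card_mult_inv_eq_conj_count[OF g h] g h
    by (simp cong: conj_cong)
  from sum_exp_card_UN_le[where m=4 and K=k and k=k and f=f, OF inj _ t] show ?thesis
    unfolding U Nc by (simp add: algebra_simps)
qed

lemma prob_uncovered_le:
  fixes k :: nat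
  assumes g: "g \<in> carrier G"
  defines "t \<equiv> real k / N" and "\<kappa> \<equiv> real k ^ 2 / N"
  shows "prob_uncovered k g \<le> exp (- \<kappa> * (2 - centr_size g / N) + 10 * (\<kappa> * t * exp (20*t)))"
proof -
  have t0: "t \<ge> 0" and kt: "\<kappa> = real k * t" unfolding t_def \<kappa>_def by (simp_all add: power2_eq_square)
  have "(\<Sum>a\<in>tuples k. (real N - card (coverers g (a ` {..<k})))^k)
      \<le> (\<Sum>a\<in>tuples k. real N^k * exp (- t * card (coverers g (a ` {..<k}))))"
    unfolding t_def using N_pos card_coverers_le[OF g tuples_image_subset]
    by (intro sum_mono diff_power_le_exp) auto
  also have "\<dots> \<le> real N^k * (real N ^ k * exp (k * (- 2*t + (exp (t*6) - 1)/6 * (centr_size g/N + 4*t))))"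
    unfolding sum_distrib_left[symmetric] using sum_exp_card_coverers_le[OF g t0, of k]
    by (intro mult_left_mono) (simp_all add: t_def)
  finally have "prob_uncovered k g \<le> exp (k * (- 2*t + (exp (t*6) - 1)/6 * (centr_size g/N + 4*t)))"
    unfolding prob_uncovered_eq[OF g] using N_pos by (simp add: field_simps power_mult power2_eq_square)
  also have "\<dots> \<le> exp (- \<kappa> * (2 - centr_size g / N) + 10 * (\<kappa> * t * exp (20*t)))"
  proof -
    have "real k * ((exp (t*6) - 1)/6 * (centr_size g/N + 4 * t))
        \<le> \<kappa> * (centr_size g/N) + (6*1 + 4) * (\<kappa> * t * exp (20*t))"
      by (rule exp_moment_error_le) (use kt t0 centr_size_div_le_1 in auto)
    then show ?thesis using kt by (simp add: algebra_simps)
  qed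
  finally show ?thesis .
qed

lemma prob_uncovered2_le:
  fixes k :: nat
  assumes g: "g \<in> carrier G" and h: "h \<in> carrier G" and gh: "g \<noteq> h"
  defines "t \<equiv> real k / N" and "\<kappa> \<equiv> real k ^ 2 / N"
  defines "c \<equiv> real (centr_size g + centr_size h + 2 * conj_count g h) / N"
  shows "prob_uncovered2 k g h \<le> exp (- 4 * \<kappa> + \<kappa> * c + 96 * (\<kappa> * t * exp (20*t)))"
proof -
  have t0: "t \<ge> 0" and kt: "\<kappa> = real k * t" unfolding t_def \<kappa>_def by (simp_all add: power2_eq_square)
  have "(\<Sum>a\<in>tuples k. (real N - card (coverers g (a ` {..<k}) \<union> coverers h (a ` {..<k})))^k)
      \<le> (\<Sum>a\<in>tuples k. real N^k * exp (- t * card (coverers g (a ` {..<k}) \<union> coverers h (a ` {..<k}))))"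
    unfolding t_def using N_pos card_coverers_Un_le[OF g h tuples_image_subset]
    by (intro sum_mono diff_power_le_exp) auto
  also have "\<dots> \<le> real N^k * (real N ^ k * exp (k * (- 4*t + (exp (t*20) - 1)/20 * (c + 16*t))))"
    unfolding sum_distrib_left[symmetric] using sum_exp_card_coverers_Un_le[OF g h gh t0, of k]
    by (intro mult_left_mono) (simp_all add: t_def c_def)
  finally have "prob_uncovered2 k g h \<le> exp (k * (- 4*t + (exp (t*20) - 1)/20 * (c + 16*t)))"
    unfolding prob_uncovered2_eq[OF g h] using N_pos by (simp add: field_simps power_mult power2_eq_square)
  also have "\<dots> \<le> exp (- 4 * \<kappa> + \<kappa> * c + 96 * (\<kappa> * t * exp (20*t)))"
  proof -
    have "real (centr_size g + centr_size h + 2 * conj_count g h) \<le> 4 * N"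
      using centr_size_le[of g] centr_size_le[of h] conj_count_le[of g h] by simp
    then have "c \<le> 4" unfolding c_def using N_pos by (simp add: divide_le_eq)
    then have "real k * ((exp (t*20) - 1)/20 * (c + 16 * t)) \<le> \<kappa> * c + (20*4 + 16) * (\<kappa> * t * exp (20*t))"
      by (intro exp_moment_error_le) (use kt t0 in \<open>auto simp: c_def\<close>)
    then show ?thesis using kt by (simp add: algebra_simps)
  qed
  finally show ?thesis .
qed

lemma card_coverers_centr_le:
  assumes g: "g \<in> carrier G" and A: "A \<subseteq> carrier G" "finite A"
  shows "card (coverers g A) + card (A \<inter> centr G g) \<le> 2 * card A"
proof -
  have "coverers g A \<subseteq> (\<lambda>x. inv x \<otimes> g) ` A \<union> (\<lambda>x. g \<otimes> inv x) ` (A - centr G g)"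
  proof
    fix y assume "y \<in> coverers g A"
    then obtain x where x: "x \<in> A" "y = inv x \<otimes> g \<or> y = g \<otimes> inv x" unfolding coverers_def by auto
    show "y \<in> (\<lambda>x. inv x \<otimes> g) ` A \<union> (\<lambda>x. g \<otimes> inv x) ` (A - centr G g)"
    proof (cases "x \<in> centr G g")
      case True
      then have "g \<otimes> inv x = inv x \<otimes> g" using inv_commute_iff[of x g] g A x unfolding centr_def by auto
      then show ?thesis using x by auto
    next
      case False then show ?thesis using x by auto
    qed
  qed
  then have "card (coverers g A) \<le> card ((\<lambda>x. inv x \<otimes> g) ` A \<union> (\<lambda>x. g \<otimes> inv x) ` (A - centr G g))"
    by (rule card_mono[rotated]) (use A in auto)
  also have "\<dots> \<le> card ((\<lambda>x. inv x \<otimes> g) ` A) + card ((\<lambda>x. g \<otimes> inv x) ` (A - centr G g))" by (rule card_Un_le)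
  also have "\<dots> \<le> card A + card (A - centr G g)" by (intro add_mono card_image_le) (use A in auto)
  finally show ?thesis using card_Int_Diff[of A "centr G g"] A by simp
qed

lemma sum_card_image_Int:
  assumes C: "C \<subseteq> carrier G"
  shows "(\<Sum>a\<in>tuples k. real (card (a ` {..<k} \<inter> C))) = card C * (real N ^ k - (real N - 1) ^ k)"
proof -
  have finC: "finite C" using C finite_carrier by (rule finite_subset)
  have "(\<Sum>a\<in>tuples k. real (card (a ` {..<k} \<inter> C))) = (\<Sum>a\<in>tuples k. \<Sum>x\<in>C. of_bool (x \<in> a ` {..<k}))"
    using finC by (intro sum.cong refl) (simp add: sum_of_bool_eq Int_def conj_commute)
  also have "\<dots> = (\<Sum>x\<in>C. \<Sum>a\<in>tuples k. of_bool (x \<in> a ` {..<k}))" by (rule sum.swap)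
  also have "\<dots> = (\<Sum>x\<in>C. real N ^ k - (real N - 1) ^ k)"
  proof (rule sum.cong[OF refl])
    fix x assume x: "x \<in> C"
    have "(\<Sum>a\<in>tuples k. of_bool (x \<in> a ` {..<k}) :: real) = (\<Sum>a\<in>tuples k. 1 - of_bool (\<forall>j<k. a j \<notin> {x}))"
      by (intro sum.cong refl) auto
    also have "\<dots> = real (card (tuples k)) - (\<Sum>a\<in>tuples k. of_bool (\<forall>j<k. a j \<notin> {x}))"
      by (simp only: sum_subtractf) simp
    also have "(\<Sum>a\<in>tuples k. of_bool (\<forall>j<k. a j \<notin> {x})) = (real N - card {x}) ^ k"
      by (rule sum_tuples_avoiding) (use x C in auto)
    finally show "(\<Sum>a\<in>tuples k. of_bool (x \<in> a ` {..<k}) :: real) = real N ^ k - (real N - 1) ^ k"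
      by (simp add: card_tuples)
  qed
  finally show ?thesis by simp
qed

lemma sum_card_coverers_le:
  fixes k :: nat
  assumes g: "g \<in> carrier G"
  shows "(\<Sum>a\<in>tuples k. real (card (coverers g (a ` {..<k}))))
    \<le> real N ^ k * (real k * (2 - centr_size g / N * (1 - real k / N)))"
proof -
  define C where "C = centr G g"
  have C: "C \<subseteq> carrier G" unfolding C_def centr_def by auto
  have n0: "real N > 0" using N_pos by simp
  have "real (card (coverers g (a ` {..<k}))) \<le> 2 * real k - real (card (a ` {..<k} \<inter> C))"
    if a: "a \<in> tuples k" for a
  proof -
    have "card (coverers g (a ` {..<k})) + card (a ` {..<k} \<inter> C) \<le> 2 * card (a ` {..<k})"
      unfolding C_def by (rule card_coverers_centr_le[OF g tuples_image_subset[OF a]]) simp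
    also have "card (a ` {..<k}) \<le> k" using card_image_le[of "{..<k}" a] by simp
    finally show ?thesis by linarith
  qed
  then have "(\<Sum>a\<in>tuples k. real (card (coverers g (a ` {..<k}))))
      \<le> (\<Sum>a\<in>tuples k. 2 * real k - real (card (a ` {..<k} \<inter> C)))"
    by (rule sum_mono)
  also have "\<dots> = real N ^ k * (2 * real k - card C * (1 - (1 - 1 / real N) ^ k))"
    using n0 by (simp add: sum_subtractf sum_card_image_Int[OF C] card_tuples field_simps power_divide)
  also have "\<dots> \<le> real N ^ k * (2 * real k - card C * (k * (1 / real N) * (1 - k * (1 / real N))))"
    using one_minus_power_ge[of "1 / real N" k] n0 N_pos
    by (intro mult_left_mono diff_left_mono mult_left_mono) (auto simp: field_simps)
  also have "\<dots> = real N ^ k * (real k * (2 - centr_size g / N * (1 - real k / N)))"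
    unfolding centr_size_def C_def using n0 by (simp add: field_simps)
  finally show ?thesis .
qed

text \<open>
  The matching lower bound: by Jensen's inequality it suffices to bound the mean of
  \<open>|coverers g A|\<close> from above, and this mean falls short of \<open>2k\<close> by the expected number
  of \<open>a\<^sub>i\<close> commuting with \<open>g\<close>.
\<close>
lemma prob_uncovered_ge_exp_mean:
  fixes k :: nat
  assumes g: "g \<in> carrier G" and k4: "4 * k \<le> N"
  defines "\<tau> \<equiv> real k / N + 4 * (real k / N)^2"
  shows "exp (- \<tau> * ((\<Sum>a\<in>tuples k. real (card (coverers g (a ` {..<k})))) / real N ^ k)) \<le> prob_uncovered k g"
proof -
  define s where "s a = real (card (coverers g (a ` {..<k})))" for a
  have n0: "real N > 0" using N_pos by simp
  have s2k: "s a \<le> 2 * real k" and sN: "2 * s a \<le> N" if "a \<in> tuples k" for a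
    using card_coverers_centr_le[OF g tuples_image_subset[OF that]] card_image_le[of "{..<k}" a] k4
    unfolding s_def by simp_all
  have "real N ^ k * exp (- \<tau> * ((\<Sum>a\<in>tuples k. s a) / real N ^ k)) \<le> (\<Sum>a\<in>tuples k. exp (- \<tau> * s a))"
    using card_mult_exp_mean_le_sum_exp[OF finite_tuples[of k] tuples_not_empty[of k], where s="\<lambda>a. - \<tau> * s a"]
    by (simp add: card_tuples sum_negf sum_distrib_left[symmetric])
  then have "real N ^ k * real N ^ k * exp (- \<tau> * ((\<Sum>a\<in>tuples k. s a) / real N ^ k))
      \<le> real N ^ k * (\<Sum>a\<in>tuples k. exp (- \<tau> * s a))"
    unfolding mult.assoc by (rule mult_left_mono) simp_all
  also have "\<dots> \<le> (\<Sum>a\<in>tuples k. (real N - s a)^k)"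
    unfolding sum_distrib_left \<tau>_def
    by (intro sum_mono diff_power_ge_exp) (use s2k sN n0 in \<open>auto simp: s_def\<close>)
  finally show ?thesis
    unfolding prob_uncovered_eq[OF g] s_def using n0 by (simp add: power_mult power2_eq_square field_simps)
qed

lemma prob_uncovered_ge:
  fixes k :: nat
  assumes g: "g \<in> carrier G" and k4: "4 * k \<le> N"
  defines "t \<equiv> real k / N" and "\<kappa> \<equiv> real k ^ 2 / N"
  shows "prob_uncovered k g \<ge> exp (- \<kappa> * (2 - centr_size g / N) - 9 * (\<kappa> * t))"
proof -
  have n0: "real N > 0" using N_pos by simp
  define \<tau> where "\<tau> = t + 4*t^2"
  define m where "m = (\<Sum>a\<in>tuples k. real (card (coverers g (a ` {..<k})))) / real N ^ k"
  define c where "c = centr_size g / N"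
  have t0: "t \<ge> 0" and t1: "t \<le> 1" unfolding t_def using k4 n0 by (auto simp: field_simps)
  have c0: "0 \<le> c" and c1: "c \<le> 1" unfolding c_def using centr_size_div_le_1 by auto
  have \<kappa>0: "\<kappa> \<ge> 0" unfolding \<kappa>_def by simp
  have "\<tau> * m \<le> \<tau> * (real k * (2 - c * (1 - t)))"
    using sum_card_coverers_le[OF g, of k] n0 unfolding m_def c_def t_def \<tau>_def
    by (intro mult_left_mono) (auto simp: field_simps)
  also have "\<dots> = \<kappa> * (2 - c) + \<kappa> * c * t + 4 * \<kappa> * t * (2 - c * (1 - t))"
    unfolding \<tau>_def \<kappa>_def t_def using n0 by (simp add: field_simps power2_eq_square)
  also have "\<kappa> * c * t \<le> \<kappa> * t"
    using mult_left_le_one_le[of "\<kappa> * t" c] c0 c1 \<kappa>0 t0 by (simp add: algebra_simps)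
  also have "4 * \<kappa> * t * (2 - c * (1 - t)) \<le> 4 * \<kappa> * t * 2"
    using c0 t1 \<kappa>0 t0 by (intro mult_left_mono) auto
  finally have "exp (- \<kappa> * (2 - c) - 9 * (\<kappa> * t)) \<le> exp (- \<tau> * m)" by simp
  also have "\<dots> \<le> prob_uncovered k g"
    using prob_uncovered_ge_exp_mean[OF g k4] unfolding m_def \<tau>_def t_def .
  finally show ?thesis unfolding c_def .
qed

section \<open>First and second moments\<close>

definition num_uncovered :: "nat \<Rightarrow> (nat \<Rightarrow> 'a) \<Rightarrow> (nat \<Rightarrow> 'a) \<Rightarrow> real" where
  "num_uncovered k a b = (\<Sum>g\<in>carrier G. of_bool (uncovered k a b g))"

lemma covered_indicator_le_num_uncovered:
  "1 - of_bool (\<forall>g\<in>carrier G. \<not> uncovered k a b g) \<le> num_uncovered k a b"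
proof (cases "\<forall>g\<in>carrier G. \<not> uncovered k a b g")
  case True
  then show ?thesis unfolding num_uncovered_def by (simp add: sum_nonneg)
next
  case False
  then obtain g where "g \<in> carrier G" "uncovered k a b g" by auto
  then show ?thesis unfolding num_uncovered_def
    using member_le_sum[of g "carrier G" "\<lambda>g. of_bool (uncovered k a b g) :: real"] False by auto
qed

lemma covered_indicator_le_deviation:
  assumes "\<mu> > 0"
  shows "of_bool (\<forall>g\<in>carrier G. \<not> uncovered k a b g) \<le> (num_uncovered k a b - \<mu>)^2 / \<mu>^2"
  using assms by (cases "\<forall>g\<in>carrier G. \<not> uncovered k a b g") (simp_all add: num_uncovered_def)

lemma sum_num_uncovered:
  "(\<Sum>a\<in>tuples k. \<Sum>b\<in>tuples k. num_uncovered k a b) = real N ^ (2*k) * (\<Sum>g\<in>carrier G. prob_uncovered k g)"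
proof -
  have "(\<Sum>a\<in>tuples k. \<Sum>b\<in>tuples k. num_uncovered k a b)
      = (\<Sum>g\<in>carrier G. \<Sum>a\<in>tuples k. \<Sum>b\<in>tuples k. of_bool (uncovered k a b g))"
    unfolding num_uncovered_def by (rule sum_swap3)
  then show ?thesis unfolding prob_uncovered_def sum_distrib_left using N_pos by simp
qed

lemma sum_num_uncovered_sq:
  "(\<Sum>a\<in>tuples k. \<Sum>b\<in>tuples k. num_uncovered k a b ^ 2)
    = real N ^ (2*k) * (\<Sum>g\<in>carrier G. prob_uncovered k g + (\<Sum>h\<in>carrier G - {g}. prob_uncovered2 k g h))"
proof -
  define U where "U a b g = (of_bool (uncovered k a b g) :: real)" for a b g
  have "num_uncovered k a b ^ 2 = (\<Sum>g\<in>carrier G. U a b g + (\<Sum>h\<in>carrier G - {g}. U a b g * U a b h))" for a b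
  proof -
    have "num_uncovered k a b ^ 2 = (\<Sum>g\<in>carrier G. \<Sum>h\<in>carrier G. U a b g * U a b h)"
      unfolding num_uncovered_def U_def power2_eq_square by (simp add: sum_product)
    also have "\<dots> = (\<Sum>g\<in>carrier G. U a b g * U a b g + (\<Sum>h\<in>carrier G - {g}. U a b g * U a b h))"
      by (intro sum.cong refl) (simp add: sum.remove)
    also have "\<dots> = (\<Sum>g\<in>carrier G. U a b g + (\<Sum>h\<in>carrier G - {g}. U a b g * U a b h))"
      unfolding U_def by (intro sum.cong refl) simp
    finally show ?thesis .
  qed
  then have "(\<Sum>a\<in>tuples k. \<Sum>b\<in>tuples k. num_uncovered k a b ^ 2)
      = (\<Sum>g\<in>carrier G. (\<Sum>a\<in>tuples k. \<Sum>b\<in>tuples k. U a b g)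
          + (\<Sum>h\<in>carrier G - {g}. \<Sum>a\<in>tuples k. \<Sum>b\<in>tuples k. U a b g * U a b h))"
    by (simp add: sum.distrib sum_swap3[of _ "tuples k"])
  also have "\<dots> = (\<Sum>g\<in>carrier G. real N ^ (2*k) * prob_uncovered k g
      + (\<Sum>h\<in>carrier G - {g}. real N ^ (2*k) * prob_uncovered2 k g h))"
    unfolding prob_uncovered_def prob_uncovered2_def U_def using N_pos by simp
  finally show ?thesis by (simp add: sum_distrib_left distrib_left)
qed

lemma one_minus_Pcov_le_sum: "1 - Pcov G k \<le> (\<Sum>g\<in>carrier G. prob_uncovered k g)"
proof -
  have "real N ^ (2*k) - (\<Sum>a\<in>tuples k. \<Sum>b\<in>tuples k. of_bool (\<forall>g\<in>carrier G. \<not> uncovered k a b g))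
      = (\<Sum>a\<in>tuples k. \<Sum>b\<in>tuples k. 1 - of_bool (\<forall>g\<in>carrier G. \<not> uncovered k a b g))"
    by (simp add: N_power_eq_card_tuples_sq sum_subtractf)
  also have "\<dots> \<le> (\<Sum>a\<in>tuples k. \<Sum>b\<in>tuples k. num_uncovered k a b)"
    by (intro sum_mono covered_indicator_le_num_uncovered)
  finally show ?thesis unfolding Pcov_eq_sum sum_num_uncovered using N_pos by (simp add: field_simps)
qed

lemma Pcov_le_second_moment:
  fixes k :: nat
  defines "\<mu> \<equiv> (\<Sum>g\<in>carrier G. prob_uncovered k g)"
  assumes \<mu>0: "\<mu> > 0"
  shows "Pcov G k \<le> (\<Sum>g\<in>carrier G. prob_uncovered k g + (\<Sum>h\<in>carrier G - {g}. prob_uncovered2 k g h)) / \<mu>^2 - 1"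
proof -
  have n0: "real N ^ (2*k) > 0" using N_pos by simp
  have "Pcov G k * real N ^ (2*k) \<le> (\<Sum>a\<in>tuples k. \<Sum>b\<in>tuples k. (num_uncovered k a b - \<mu>)^2 / \<mu>^2)"
    unfolding Pcov_eq_sum using n0 by simp (intro sum_mono covered_indicator_le_deviation \<mu>0)
  also have "\<dots> = (\<Sum>a\<in>tuples k. \<Sum>b\<in>tuples k. num_uncovered k a b ^ 2 - 2 * \<mu> * num_uncovered k a b + \<mu>^2) / \<mu>^2"
    unfolding sum_divide_distrib by (intro sum.cong refl) (simp add: power2_diff algebra_simps)
  also have "\<dots> = ((\<Sum>a\<in>tuples k. \<Sum>b\<in>tuples k. num_uncovered k a b ^ 2)
      - 2 * \<mu> * (\<Sum>a\<in>tuples k. \<Sum>b\<in>tuples k. num_uncovered k a b) + \<mu>^2 * real N ^ (2*k)) / \<mu>^2"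
    by (simp only: sum.distrib sum_subtractf sum_distrib_left[symmetric] sum_constant N_power_eq_card_tuples_sq)
      (simp add: algebra_simps)
  also have "\<dots> = real N ^ (2*k) * ((\<Sum>g\<in>carrier G. prob_uncovered k g
      + (\<Sum>h\<in>carrier G - {g}. prob_uncovered2 k g h)) / \<mu>^2 - 1)"
    unfolding sum_num_uncovered sum_num_uncovered_sq \<mu>_def[symmetric] using \<mu>0
    by (simp add: field_simps power2_eq_square)
  finally show ?thesis using n0 by (simp add: mult.commute)
qed

lemma one_minus_Pcov_le_exp:
  fixes k :: nat
  assumes n2: "N \<ge> 2"
  defines "t \<equiv> real k / N" and "\<kappa> \<equiv> real k ^ 2 / N" and "\<xi> \<equiv> Theta G"
  assumes big: "\<kappa> \<ge> \<xi> * ln N"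
  shows "1 - Pcov G k \<le> exp (10 * (\<kappa> * t * exp (20*t)) - (\<kappa> - \<xi> * ln N))"
proof -
  define X where "X = 10 * (\<kappa> * t * exp (20*t)) - (\<kappa> - \<xi> * ln N)"
  have "1 - Pcov G k \<le> (\<Sum>g\<in>carrier G. prob_uncovered k g)" by (rule one_minus_Pcov_le_sum)
  also have "\<dots> \<le> (\<Sum>g\<in>carrier G. exp X * exp (- \<xi> * ln N * (2 - centr_size g / N)))"
  proof (rule sum_mono)
    fix g assume g: "g \<in> carrier G"
    define c where "c = centr_size g / N"
    have "(\<kappa> - \<xi> * ln N) * 1 \<le> (\<kappa> - \<xi> * ln N) * (2 - c)"
      using big centr_size_div_le_1[of g] unfolding c_def by (intro mult_left_mono) auto
    then have "- \<kappa> * (2 - c) + 10 * (\<kappa> * t * exp (20*t)) \<le> X + - \<xi> * ln N * (2 - c)"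
      unfolding X_def by (simp add: algebra_simps)
    then show "prob_uncovered k g \<le> exp X * exp (- \<xi> * ln N * (2 - centr_size g / N))"
      using prob_uncovered_le[OF g, of k] unfolding t_def \<kappa>_def c_def exp_add[symmetric]
      by (meson exp_le_cancel_iff order_trans)
  qed
  also have "\<dots> = exp X"
    unfolding sum_distrib_left[symmetric] \<xi>_def sum_exp_Theta_eq_1[OF n2] by simp
  finally show ?thesis unfolding X_def .
qed

lemma sum_prob_uncovered_ge:
  fixes k :: nat
  assumes n2: "N \<ge> 2" and k4: "4 * k \<le> N"
  defines "t \<equiv> real k / N" and "\<kappa> \<equiv> real k ^ 2 / N" and "\<xi> \<equiv> Theta G"
  assumes small: "\<kappa> \<le> \<xi> * ln N"
  shows "(\<Sum>g\<in>carrier G. prob_uncovered k g) \<ge> exp (\<xi> * ln N - \<kappa> - 9 * (\<kappa> * t))"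
proof -
  define X where "X = \<xi> * ln N - \<kappa> - 9 * (\<kappa> * t)"
  have "exp X = (\<Sum>g\<in>carrier G. exp X * exp (- \<xi> * ln N * (2 - centr_size g / N)))"
    unfolding sum_distrib_left[symmetric] \<xi>_def sum_exp_Theta_eq_1[OF n2] by simp
  also have "\<dots> \<le> (\<Sum>g\<in>carrier G. prob_uncovered k g)"
  proof (rule sum_mono)
    fix g assume g: "g \<in> carrier G"
    define c where "c = centr_size g / N"
    have "(\<xi> * ln N - \<kappa>) * 1 \<le> (\<xi> * ln N - \<kappa>) * (2 - c)"
      using small centr_size_div_le_1[of g] unfolding c_def by (intro mult_left_mono) auto
    then have "X + - \<xi> * ln N * (2 - c) \<le> - \<kappa> * (2 - c) - 9 * (\<kappa> * t)"
      unfolding X_def by (simp add: algebra_simps)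
    then show "exp X * exp (- \<xi> * ln N * (2 - centr_size g / N)) \<le> prob_uncovered k g"
      using prob_uncovered_ge[OF g k4] unfolding t_def \<kappa>_def c_def exp_add[symmetric]
      by (meson exp_le_cancel_iff order_trans)
  qed
  finally show ?thesis unfolding X_def .
qed

text \<open>
  Uncovered events of conjugate \<open>g \<noteq> h\<close> are strongly correlated, but then \<open>|C(g)| \<le> n/2\<close>
  and the joint probability is still exponentially smaller than that of \<open>g\<close> alone.
\<close>
lemma prob_uncovered2_le_if_conj:
  fixes k :: nat
  assumes g: "g \<in> carrier G" and h: "h \<in> carrier G" and gh: "g \<noteq> h"
    and conj: "conj_count g h > 0" and k4: "4 * k \<le> N"
  defines "t \<equiv> real k / N" and "\<kappa> \<equiv> real k ^ 2 / N"
  shows "prob_uncovered2 k g h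
    \<le> exp (- \<kappa> / 2 + 96 * (\<kappa> * t * exp (20*t)) + 9 * (\<kappa> * t)) * prob_uncovered k g"
proof -
  define cg where "cg = centr_size g / N"
  have \<kappa>0: "\<kappa> \<ge> 0" unfolding \<kappa>_def by simp
  have "real (centr_size g + centr_size h + 2 * conj_count g h) / N = 4 * cg"
    using conj_count_pos_centr_size[OF g h conj] unfolding cg_def by simp
  moreover have "\<kappa> * cg \<le> \<kappa> * (1/2)"
    using centr_size_le_half[OF g h gh[symmetric] conj] N_pos \<kappa>0 unfolding cg_def
    by (intro mult_left_mono) (simp_all add: field_simps)
  ultimately have "- 4 * \<kappa> + \<kappa> * (real (centr_size g + centr_size h + 2 * conj_count g h) / N)
      + 96 * (\<kappa> * t * exp (20*t))
    \<le> (- \<kappa> / 2 + 96 * (\<kappa> * t * exp (20*t)) + 9 * (\<kappa> * t)) + (- \<kappa> * (2 - cg) - 9 * (\<kappa> * t))"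
    by (simp add: algebra_simps)
  then have "prob_uncovered2 k g h
      \<le> exp (- \<kappa> / 2 + 96 * (\<kappa> * t * exp (20*t)) + 9 * (\<kappa> * t)) * exp (- \<kappa> * (2 - cg) - 9 * (\<kappa> * t))"
    using prob_uncovered2_le[OF g h gh, of k] unfolding t_def \<kappa>_def exp_add[symmetric]
    by (meson exp_le_cancel_iff order_trans)
  also have "\<dots> \<le> exp (- \<kappa> / 2 + 96 * (\<kappa> * t * exp (20*t)) + 9 * (\<kappa> * t)) * prob_uncovered k g"
    using prob_uncovered_ge[OF g k4] unfolding t_def \<kappa>_def cg_def by (intro mult_left_mono) auto
  finally show ?thesis .
qed

lemma prob_uncovered2_le_product:
  fixes k :: nat and \<delta> :: real
  assumes g: "g \<in> carrier G" and h: "h \<in> carrier G" and gh: "g \<noteq> h" and k4: "4 * k \<le> N"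
  defines "t \<equiv> real k / N" and "\<kappa> \<equiv> real k ^ 2 / N"
  assumes small: "\<kappa> * (conj_count g h / N) \<le> \<delta>"
  shows "prob_uncovered2 k g h
    \<le> exp (96 * (\<kappa> * t * exp (20*t)) + 18 * (\<kappa> * t) + 2 * \<delta>) * prob_uncovered k g * prob_uncovered k h"
proof -
  define cg where "cg = centr_size g / N"
  define ch where "ch = centr_size h / N"
  define \<eta> where "\<eta> = 96 * (\<kappa> * t * exp (20*t)) + 18 * (\<kappa> * t) + 2 * \<delta>"
  have "\<kappa> * (real (centr_size g + centr_size h + 2 * conj_count g h) / N)
      = \<kappa> * cg + \<kappa> * ch + 2 * (\<kappa> * (conj_count g h / N))"
    unfolding cg_def ch_def by (simp add: algebra_simps add_divide_distrib)
  moreover have "- \<kappa> * (2 - cg) = - 2 * \<kappa> + \<kappa> * cg" "- \<kappa> * (2 - ch) = - 2 * \<kappa> + \<kappa> * ch"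
    by (simp_all add: algebra_simps)
  ultimately have "- 4 * \<kappa> + \<kappa> * (real (centr_size g + centr_size h + 2 * conj_count g h) / N)
      + 96 * (\<kappa> * t * exp (20*t))
    \<le> (- \<kappa> * (2 - cg) - 9 * (\<kappa> * t)) + (- \<kappa> * (2 - ch) - 9 * (\<kappa> * t)) + \<eta>"
    using small unfolding \<eta>_def by linarith
  then have "prob_uncovered2 k g h \<le> exp (- \<kappa> * (2 - cg) - 9 * (\<kappa> * t)) * exp (- \<kappa> * (2 - ch) - 9 * (\<kappa> * t)) * exp \<eta>"
    using prob_uncovered2_le[OF g h gh, of k] unfolding t_def \<kappa>_def exp_add[symmetric]
    by (meson exp_le_cancel_iff order_trans)
  also have "\<dots> \<le> prob_uncovered k g * prob_uncovered k h * exp \<eta>"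
    using prob_uncovered_ge[OF g k4] prob_uncovered_ge[OF h k4] unfolding t_def \<kappa>_def cg_def ch_def
    by (intro mult_right_mono mult_mono) (auto intro: prob_uncovered_nonneg)
  finally show ?thesis unfolding \<eta>_def by (simp add: algebra_simps)
qed

lemma sum_large_conjugates_le:
  fixes \<kappa> \<delta> :: real
  assumes g: "g \<in> carrier G" and \<delta>: "\<delta> > 0" and \<kappa>: "\<kappa> \<ge> 0"
  shows "(\<Sum>h\<in>carrier G. of_bool (conj_count g h > 0 \<and> \<delta> < \<kappa> * (centr_size g / N))) \<le> \<kappa> / \<delta>"
proof (cases "\<delta> < \<kappa> * (centr_size g / N)")
  case True
  have "(\<Sum>h\<in>carrier G. of_bool (conj_count g h > 0 \<and> \<delta> < \<kappa> * (centr_size g / N)))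
      = real (card {h\<in>carrier G. conj_count g h > 0})"
    using True by (simp add: sum_of_bool_eq Int_def)
  also have "\<dots> \<le> real N / real (centr_size g)"
    using card_conjugates_mult_centr_size_le[OF g] centr_size_pos[OF g]
    by (simp add: le_divide_eq of_nat_mult[symmetric] del: of_nat_mult)
  also have "\<dots> \<le> \<kappa> / \<delta>"
    using True \<delta> centr_size_pos[OF g] N_pos by (simp add: field_simps)
  finally show ?thesis .
next
  case False
  then show ?thesis using \<kappa> \<delta> by simp
qed

lemma prob_uncovered2_le_split:
  fixes k :: nat and \<delta> :: real
  assumes g: "g \<in> carrier G" and h: "h \<in> carrier G" and gh: "g \<noteq> h" and \<delta>: "\<delta> > 0"
    and k4: "4 * k \<le> N"
  defines "t \<equiv> real k / N" and "\<kappa> \<equiv> real k ^ 2 / N"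
  defines "\<eta> \<equiv> 96 * (\<kappa> * t * exp (20*t)) + 18 * (\<kappa> * t) + 2 * \<delta>"
    and "\<beta> \<equiv> exp (- \<kappa> / 2 + 96 * (\<kappa> * t * exp (20*t)) + 9 * (\<kappa> * t))"
  shows "prob_uncovered2 k g h \<le> exp \<eta> * prob_uncovered k g * prob_uncovered k h
    + of_bool (conj_count g h > 0 \<and> \<delta> < \<kappa> * (centr_size g / N)) * \<beta> * prob_uncovered k g"
proof (cases "conj_count g h > 0 \<and> \<delta> < \<kappa> * (centr_size g / N)")
  case True
  then have "prob_uncovered2 k g h \<le> \<beta> * prob_uncovered k g"
    using prob_uncovered2_le_if_conj[OF g h gh _ k4] unfolding \<beta>_def t_def \<kappa>_def by blast
  moreover have "0 \<le> exp \<eta> * prob_uncovered k g * prob_uncovered k h"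
    by (simp add: prob_uncovered_nonneg)
  ultimately show ?thesis using True by simp
next
  case False
  have "\<kappa> * (conj_count g h / N) \<le> \<delta>"
    using False conj_count_pos_centr_size(2)[OF g h] \<delta> by (cases "conj_count g h > 0") auto
  then have "prob_uncovered2 k g h \<le> exp \<eta> * prob_uncovered k g * prob_uncovered k h"
    using prob_uncovered2_le_product[OF g h gh k4] unfolding \<eta>_def t_def \<kappa>_def by blast
  moreover have z: "of_bool (conj_count g h > 0 \<and> \<delta> < \<kappa> * (centr_size g / N)) = (0::real)"
    using False by (simp only: of_bool_eq_0_iff not_False_eq_True)
  ultimately show ?thesis unfolding z by simp
qed

lemma sum_prob_uncovered2_le:
  fixes k :: nat and \<delta> :: real
  assumes g: "g \<in> carrier G" and \<delta>: "\<delta> > 0" and k4: "4 * k \<le> N"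
  defines "t \<equiv> real k / N" and "\<kappa> \<equiv> real k ^ 2 / N"
  defines "\<eta> \<equiv> 96 * (\<kappa> * t * exp (20*t)) + 18 * (\<kappa> * t) + 2 * \<delta>"
    and "\<beta> \<equiv> exp (- \<kappa> / 2 + 96 * (\<kappa> * t * exp (20*t)) + 9 * (\<kappa> * t))"
  shows "(\<Sum>h\<in>carrier G - {g}. prob_uncovered2 k g h)
    \<le> exp \<eta> * prob_uncovered k g * (\<Sum>h\<in>carrier G. prob_uncovered k h) + (\<kappa>/\<delta>) * \<beta> * prob_uncovered k g"
proof -
  define B where "B h = (of_bool (conj_count g h > 0 \<and> \<delta> < \<kappa> * (centr_size g / N)) :: real)" for h
  have \<kappa>0: "\<kappa> \<ge> 0" and \<beta>0: "\<beta> \<ge> 0" unfolding \<kappa>_def \<beta>_def by simp_all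
  have "(\<Sum>h\<in>carrier G - {g}. prob_uncovered2 k g h)
      \<le> (\<Sum>h\<in>carrier G - {g}. exp \<eta> * prob_uncovered k g * prob_uncovered k h + B h * \<beta> * prob_uncovered k g)"
    unfolding B_def \<eta>_def \<beta>_def \<kappa>_def t_def
    by (intro sum_mono prob_uncovered2_le_split[OF g _ _ \<delta> k4]) auto
  also have "\<dots> = exp \<eta> * prob_uncovered k g * (\<Sum>h\<in>carrier G - {g}. prob_uncovered k h)
      + (\<Sum>h\<in>carrier G - {g}. B h) * (\<beta> * prob_uncovered k g)"
    by (simp add: sum.distrib sum_distrib_left sum_distrib_right mult.assoc)
  also have "(\<Sum>h\<in>carrier G - {g}. prob_uncovered k h) \<le> (\<Sum>h\<in>carrier G. prob_uncovered k h)"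
    by (rule sum_mono2) (auto intro: prob_uncovered_nonneg)
  also have "(\<Sum>h\<in>carrier G - {g}. B h) \<le> \<kappa>/\<delta>"
    using sum_mono2[of "carrier G" "carrier G - {g}" B] sum_large_conjugates_le[OF g \<delta> \<kappa>0]
    unfolding B_def by fastforce
  finally show ?thesis
    using \<beta>0 prob_uncovered_nonneg[of k g] by (simp add: mult_left_mono mult_right_mono algebra_simps)
qed

lemma Pcov_le_error:
  fixes k :: nat and \<delta> M :: real
  assumes \<delta>: "\<delta> > 0" and k4: "4 * k \<le> N"
    and M: "0 < M" "M \<le> (\<Sum>g\<in>carrier G. prob_uncovered k g)"
  defines "t \<equiv> real k / N" and "\<kappa> \<equiv> real k ^ 2 / N"
  defines "\<eta> \<equiv> 96 * (\<kappa> * t * exp (20*t)) + 18 * (\<kappa> * t) + 2 * \<delta>"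
    and "\<beta> \<equiv> exp (- \<kappa> / 2 + 96 * (\<kappa> * t * exp (20*t)) + 9 * (\<kappa> * t))"
  shows "Pcov G k \<le> 1/M + (exp \<eta> - 1) + (\<kappa>/\<delta>) * \<beta> / M"
proof -
  define \<mu> where "\<mu> = (\<Sum>g\<in>carrier G. prob_uncovered k g)"
  have \<mu>0: "\<mu> > 0" using M unfolding \<mu>_def by linarith
  have "(\<Sum>g\<in>carrier G. prob_uncovered k g + (\<Sum>h\<in>carrier G - {g}. prob_uncovered2 k g h))
      \<le> (\<Sum>g\<in>carrier G. prob_uncovered k g + (exp \<eta> * prob_uncovered k g * \<mu> + (\<kappa>/\<delta>) * \<beta> * prob_uncovered k g))"
    unfolding \<mu>_def \<eta>_def \<beta>_def \<kappa>_def t_def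
    by (intro sum_mono add_left_mono sum_prob_uncovered2_le \<delta> k4)
  also have "\<dots> = \<mu> + exp \<eta> * \<mu> * \<mu> + (\<kappa>/\<delta>) * \<beta> * \<mu>"
    unfolding \<mu>_def by (simp add: sum.distrib sum_distrib_left sum_distrib_right algebra_simps)
  finally have "Pcov G k \<le> (\<mu> + exp \<eta> * \<mu> * \<mu> + (\<kappa>/\<delta>) * \<beta> * \<mu>) / \<mu>^2 - 1"
    using Pcov_le_second_moment[of k] \<mu>0 unfolding \<mu>_def by (smt (verit) divide_right_mono zero_le_power2)
  also have "\<dots> = 1/\<mu> + (exp \<eta> - 1) + (\<kappa>/\<delta>) * \<beta> / \<mu>"
    using \<mu>0 by (simp add: field_simps power2_eq_square)
  also have "\<dots> \<le> 1/M + (exp \<eta> - 1) + (\<kappa>/\<delta>) * \<beta> / M"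
    using M \<delta> unfolding \<mu>_def[symmetric] \<kappa>_def \<beta>_def
    by (intro add_mono divide_left_mono frac_le) auto
  finally show ?thesis .
qed

end

section \<open>Behaviour near the threshold\<close>

definition cover_threshold :: "('a, 'b) monoid_scheme \<Rightarrow> real" where
  "cover_threshold G = sqrt (Theta G * real (card (carrier G)) * ln (real (card (carrier G))))"

lemma cube_error_le:
  fixes k K n :: real
  assumes "0 \<le> k" "k \<le> K" "0 < n"
  shows "k^2/n * (k/n) \<le> K^3/n^2" "k^2/n * (k/n) * exp (20*(k/n)) \<le> K^3/n^2 * exp (20*(K/n))"
proof -
  have "k^2/n * (k/n) = k^3/n^2" by (simp add: power2_eq_square power3_eq_cube)
  also have "\<dots> \<le> K^3/n^2" using assms by (intro divide_right_mono power_mono) auto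
  finally show *: "k^2/n * (k/n) \<le> K^3/n^2" .
  have "exp (20*(k/n)) \<le> exp (20*(K/n))" using assms by (simp add: divide_right_mono)
  then show "k^2/n * (k/n) * exp (20*(k/n)) \<le> K^3/n^2 * exp (20*(K/n))"
    using * assms by (intro mult_mono) auto
qed

lemma gap_of_sq_factor:
  fixes \<epsilon> \<xi> L \<kappa> :: real
  assumes e: "0 < \<epsilon>" "\<epsilon> < 1" and \<xi>: "1/2 \<le> \<xi>" "\<xi> \<le> 1" and L: "L > 0"
    and \<kappa>: "\<kappa> \<le> (1 - \<epsilon>)^2 * \<xi> * L"
  shows "\<epsilon>/2 * L \<le> \<xi> * L - \<kappa>" "\<kappa> \<le> L"
proof -
  have "(1 - \<epsilon>)^2 \<le> 1 - \<epsilon>" using e by (simp add: power2_eq_square mult_left_le_one_le)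
  then have "(1 - \<epsilon>)^2 * \<xi> * L \<le> (1 - \<epsilon>) * \<xi> * L" using \<xi> L by (intro mult_right_mono) auto
  moreover have "\<epsilon> * (1/2) * L \<le> \<epsilon> * \<xi> * L" using e \<xi> L by (intro mult_right_mono mult_left_mono) auto
  moreover have "(1 - \<epsilon>) * \<xi> * L = \<xi> * L - \<epsilon> * \<xi> * L" by (simp add: algebra_simps)
  ultimately show gap: "\<epsilon>/2 * L \<le> \<xi> * L - \<kappa>" using \<kappa> by linarith
  have "\<xi> * L \<le> L" using \<xi> L by (simp add: mult_left_le_one_le)
  moreover have "0 < \<epsilon>/2 * L" using e L by simp
  ultimately show "\<kappa> \<le> L" using gap by linarith
qed

definition above_threshold_error :: "real \<Rightarrow> real \<Rightarrow> real" where
  "above_threshold_error \<epsilon> n =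
     (let K = (1 + \<epsilon>) * sqrt (n * ln n) + 1 in exp (10 * (K^3 / n^2 * exp (20 * (K / n))) - \<epsilon> * ln n))"

lemma above_threshold_error_tendsto_0:
  "\<epsilon> > 0 \<Longrightarrow> (above_threshold_error \<epsilon> \<longlongrightarrow> 0) at_top"
  unfolding above_threshold_error_def Let_def by real_asymp

definition below_threshold_error :: "real \<Rightarrow> real \<Rightarrow> real" where
  "below_threshold_error \<epsilon> n =
     (let A = sqrt (n * ln n)^3 / n^2; \<Omega> = A * exp (20 * (sqrt (n * ln n) / n));
          M = exp (\<epsilon>/2 * ln n - 9 * A)
      in 1/M + (exp (96*\<Omega> + 18*A + 2/ln n) - 1)
         + (ln n)^2 * exp (- ((1 - \<epsilon>)^2/16) * ln n) * exp (96*\<Omega> + 9*A) / M)"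

lemma below_threshold_error_tendsto_0:
  fixes \<epsilon> :: real
  assumes e: "0 < \<epsilon>" "\<epsilon> < 1"
  shows "(below_threshold_error \<epsilon> \<longlongrightarrow> 0) at_top"
proof -
  define A where "A y = sqrt (y * ln y) ^ 3 / y^2" for y :: real
  define \<Omega> where "\<Omega> y = A y * exp (20 * (sqrt (y * ln y) / y))" for y :: real
  define M where "M y = exp (\<epsilon>/2 * ln y - 9 * A y)" for y :: real
  have A: "(A \<longlongrightarrow> 0) at_top" unfolding A_def by real_asymp
  have "((\<lambda>y. sqrt (y * ln y) / y) \<longlongrightarrow> 0) at_top" by real_asymp
  then have \<Omega>: "(\<Omega> \<longlongrightarrow> 0) at_top"
    unfolding \<Omega>_def using tendsto_mult[OF A tendsto_exp[OF tendsto_mult[OF tendsto_const]]] by fastforce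
  have "((\<lambda>y. exp (- (\<epsilon>/2) * ln y)) \<longlongrightarrow> 0) at_top" using e by real_asymp
  then have "((\<lambda>y. exp (- (\<epsilon>/2) * ln y) * exp (9 * A y)) \<longlongrightarrow> 0 * exp (9 * 0)) at_top"
    by (intro tendsto_intros A)
  moreover have "1 / exp (a - b) = exp (- a) * exp b" for a b :: real
    by (simp add: exp_diff exp_minus field_simps)
  then have "1 / M y = exp (- (\<epsilon>/2) * ln y) * exp (9 * A y)" for y
    unfolding M_def by simp
  ultimately have inv_M: "((\<lambda>y. 1 / M y) \<longlongrightarrow> 0) at_top" by simp
  have "((\<lambda>y::real. ln y ^ 2 * exp (- c * ln y)) \<longlongrightarrow> 0) at_top" if "c > 0" for c
    using that by real_asymp
  moreover have "(1 - \<epsilon>)^2/16 > 0" using e by simp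
  ultimately have log_sq: "((\<lambda>y. ln y ^ 2 * exp (- ((1 - \<epsilon>)^2/16) * ln y)) \<longlongrightarrow> 0) at_top"
    by blast
  have "((\<lambda>y::real. 2 / ln y) \<longlongrightarrow> 0) at_top" by real_asymp
  then have "((\<lambda>y. 1 / M y + (exp (96 * \<Omega> y + 18 * A y + 2 / ln y) - 1)
      + (ln y ^ 2 * exp (- ((1 - \<epsilon>)^2/16) * ln y)) * exp (96 * \<Omega> y + 9 * A y) * (1 / M y))
      \<longlongrightarrow> 0 + (exp (96 * 0 + 18 * 0 + 0) - 1) + 0 * exp (96 * 0 + 9 * 0) * 0) at_top"
    by (intro tendsto_intros inv_M \<Omega> A log_sq)
  then show ?thesis unfolding below_threshold_error_def Let_def A_def[symmetric] \<Omega>_def[symmetric] M_def[symmetric]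
    by simp
qed

lemma eventually_below_threshold_conditions:
  fixes \<epsilon> :: real
  assumes "\<epsilon> < 1"
  shows "eventually (\<lambda>y. 2 \<le> y \<and> 4 * sqrt (y * ln y) \<le> y \<and> 2 \<le> (1 - \<epsilon>) * sqrt (y * ln y / 2)) at_top"
proof (intro eventually_conj)
  show "eventually (\<lambda>y::real. 2 \<le> y) at_top" "eventually (\<lambda>y::real. 4 * sqrt (y * ln y) \<le> y) at_top"
    by real_asymp+
  show "eventually (\<lambda>y::real. 2 \<le> (1 - \<epsilon>) * sqrt (y * ln y / 2)) at_top"
    using assms by real_asymp
qed

context finite_group
begin

lemma cover_threshold_sq: "N \<ge> 2 \<Longrightarrow> cover_threshold G ^ 2 = Theta G * N * ln N"
  unfolding cover_threshold_def using Theta_bounds by simp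

lemma cover_threshold_bounds:
  assumes "N \<ge> 2"
  shows "sqrt (N * ln N / 2) \<le> cover_threshold G" "cover_threshold G \<le> sqrt (N * ln N)"
proof -
  have L0: "ln N > 0" using assms by simp
  have "N * ln N * 1 \<le> N * ln N * (2 * Theta G)"
    using Theta_bounds[OF assms] L0 by (intro mult_left_mono) auto
  then show "sqrt (N * ln N / 2) \<le> cover_threshold G"
    unfolding cover_threshold_def by (intro real_sqrt_le_mono) (simp add: field_simps)
  have "Theta G * (N * ln N) \<le> 1 * (N * ln N)"
    using Theta_bounds[OF assms] L0 by (intro mult_right_mono) auto
  then show "cover_threshold G \<le> sqrt (N * ln N)"
    unfolding cover_threshold_def by (intro real_sqrt_le_mono) (simp add: mult.assoc)
qed

lemma one_minus_Pcov_above_le: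
  fixes \<epsilon> :: real
  assumes n2: "N \<ge> 2" and e: "\<epsilon> > 0"
  defines "K \<equiv> (1 + \<epsilon>) * sqrt (N * ln N) + 1"
  shows "1 - Pcov G (nat \<lceil>(1 + \<epsilon>) * cover_threshold G\<rceil>) \<le> above_threshold_error \<epsilon> N"
proof -
  define C where "C = cover_threshold G"
  define k where "k = nat \<lceil>(1 + \<epsilon>) * C\<rceil>"
  define \<xi> where "\<xi> = Theta G"
  have L0: "ln N > 0" using n2 by simp
  have \<xi>: "1/2 \<le> \<xi>" unfolding \<xi>_def using Theta_bounds[OF n2] by simp
  have C0: "C \<ge> 0" unfolding C_def cover_threshold_def using \<xi> L0 unfolding \<xi>_def by simp
  have "real k = of_int \<lceil>(1 + \<epsilon>) * C\<rceil>" unfolding k_def using C0 e by simp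
  then have kge: "real k \<ge> (1 + \<epsilon>) * C" and "real k \<le> (1 + \<epsilon>) * C + 1"
    by (simp_all add: ceiling_correct)
  then have kK: "real k \<le> K"
    unfolding K_def C_def using cover_threshold_bounds(2)[OF n2] e by (smt (verit) mult_left_mono)
  have "(1 + \<epsilon>)^2 * (\<xi> * N * ln N) = ((1 + \<epsilon>) * C)^2"
    using cover_threshold_sq[OF n2] unfolding C_def \<xi>_def by (simp add: power_mult_distrib)
  also have "\<dots> \<le> real k ^ 2" using kge C0 e by (intro power_mono) auto
  finally have "(1 + \<epsilon>)^2 * \<xi> * ln N \<le> real k ^ 2 / N"
    using N_pos by (simp add: field_simps)
  moreover have "\<xi> * ln N + \<epsilon> * ln N \<le> (1 + \<epsilon>)^2 * \<xi> * ln N"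
  proof -
    have "(2 * \<epsilon>) * (1/2) * ln N \<le> (2 * \<epsilon> + \<epsilon>^2) * \<xi> * ln N"
      using e \<xi> L0 by (intro mult_right_mono mult_mono) auto
    then show ?thesis by (simp add: algebra_simps power2_eq_square)
  qed
  ultimately have gap: "\<epsilon> * ln N \<le> real k ^ 2 / N - \<xi> * ln N" by linarith
  moreover have "0 < \<epsilon> * ln N" using e L0 by simp
  ultimately have big: "Theta G * ln N \<le> real k ^ 2 / N" unfolding \<xi>_def by linarith
  have "1 - Pcov G k \<le> exp (10 * (real k ^ 2 / N * (real k / N) * exp (20 * (real k / N)))
      - (real k ^ 2 / N - \<xi> * ln N))"
    using one_minus_Pcov_le_exp[OF n2 big] by (simp add: \<xi>_def mult.assoc)
  also have "\<dots> \<le> exp (10 * (K^3 / N^2 * exp (20 * (K / N))) - \<epsilon> * ln N)"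
    using cube_error_le(2)[OF _ kK, of "real N"] gap N_pos by simp
  finally show ?thesis unfolding k_def C_def above_threshold_error_def Let_def K_def by simp
qed

lemma Pcov_below_threshold_eq_0:
  fixes \<epsilon> :: real
  assumes "N \<ge> 2" "\<epsilon> \<ge> 1"
  shows "Pcov G (nat \<lfloor>(1 - \<epsilon>) * cover_threshold G\<rfloor>) = 0"
proof -
  have "0 \<le> cover_threshold G"
    using Theta_bounds[OF assms(1)] assms(1) unfolding cover_threshold_def by simp
  then have "(1 - \<epsilon>) * cover_threshold G \<le> 0"
    using assms(2) by (intro mult_nonpos_nonneg) auto
  then have "nat \<lfloor>(1 - \<epsilon>) * cover_threshold G\<rfloor> = 0" by linarith
  then show ?thesis using Pcov_0 by simp
qed

lemma below_threshold_bounds: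
  fixes \<epsilon> :: real
  assumes n2: "N \<ge> 2" and e: "0 < \<epsilon>" "\<epsilon> < 1"
    and c1: "4 * sqrt (N * ln N) \<le> N" and c2: "2 \<le> (1 - \<epsilon>) * sqrt (N * ln N / 2)"
  defines "k \<equiv> nat \<lfloor>(1 - \<epsilon>) * cover_threshold G\<rfloor>"
  shows "real k \<le> sqrt (N * ln N)" "4 * k \<le> N" "(1 - \<epsilon>)^2 / 8 * ln N \<le> real k ^ 2 / N"
    "\<epsilon>/2 * ln N \<le> Theta G * ln N - real k ^ 2 / N" "real k ^ 2 / N \<le> ln N"
proof -
  define a where "a = (1 - \<epsilon>) * cover_threshold G"
  have C: "sqrt (N * ln N / 2) \<le> cover_threshold G" "cover_threshold G \<le> sqrt (N * ln N)"
    using cover_threshold_bounds[OF n2] by auto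
  have a2: "2 \<le> a" unfolding a_def using c2 C(1) e by (smt (verit) mult_left_mono)
  have "real k = of_int \<lfloor>a\<rfloor>" unfolding k_def a_def[symmetric] using a2 by simp
  then have kle: "real k \<le> a" and kge: "a - 1 \<le> real k" by linarith+
  have "0 \<le> sqrt (N * ln N / 2)" using n2 by simp
  then have "0 \<le> cover_threshold G" using C(1) by linarith
  then have "(1 - \<epsilon>) * cover_threshold G \<le> 1 * cover_threshold G"
    using e by (intro mult_right_mono) auto
  then have "a \<le> sqrt (N * ln N)" unfolding a_def using C(2) by simp
  then show ks: "real k \<le> sqrt (N * ln N)" using kle by simp
  then have "real (4 * k) \<le> N" using c1 by simp
  then show "4 * k \<le> N" by linarith
  have a_sq: "a^2 = (1 - \<epsilon>)^2 * (Theta G * N * ln N)"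
    unfolding a_def using cover_threshold_sq[OF n2] by (simp add: power_mult_distrib)
  have "real k ^ 2 \<le> a^2" using kle a2 by (intro power_mono) auto
  then have upper: "real k ^ 2 / N \<le> (1 - \<epsilon>)^2 * Theta G * ln N"
    using N_pos unfolding a_sq by (simp add: field_simps)
  have "ln N > 0" using n2 by simp
  then show "\<epsilon>/2 * ln N \<le> Theta G * ln N - real k ^ 2 / N" "real k ^ 2 / N \<le> ln N"
    using gap_of_sq_factor[OF e Theta_bounds[OF n2] _ upper] by auto
  have "(1 - \<epsilon>)^2 * (N * ln N) / 8 \<le> (a/2)^2"
  proof -
    have "(1 - \<epsilon>)^2 * ((1/2) * N * ln N) \<le> (1 - \<epsilon>)^2 * (Theta G * N * ln N)"
      using Theta_bounds[OF n2] n2 by (intro mult_left_mono mult_right_mono) auto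
    then show ?thesis unfolding power_divide a_sq by (simp add: field_simps ac_simps)
  qed
  also have "\<dots> \<le> real k ^ 2" using kge a2 by (intro power_mono) auto
  finally show "(1 - \<epsilon>)^2 / 8 * ln N \<le> real k ^ 2 / N"
    using N_pos by (simp add: field_simps)
qed

lemma Pcov_below_le:
  fixes \<epsilon> :: real
  assumes n2: "N \<ge> 2" and e: "0 < \<epsilon>" "\<epsilon> < 1"
    and c1: "4 * sqrt (N * ln N) \<le> N" and c2: "2 \<le> (1 - \<epsilon>) * sqrt (N * ln N / 2)"
  defines "A \<equiv> sqrt (N * ln N)^3 / N^2"
  defines "\<Omega> \<equiv> A * exp (20 * (sqrt (N * ln N) / N))"
  defines "M \<equiv> exp (\<epsilon>/2 * ln N - 9 * A)"
  shows "Pcov G (nat \<lfloor>(1 - \<epsilon>) * cover_threshold G\<rfloor>) \<le> below_threshold_error \<epsilon> N"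
proof -
  have error: "below_threshold_error \<epsilon> N = 1/M + (exp (96*\<Omega> + 18*A + 2/ln N) - 1)
      + (ln N)^2 * exp (- ((1 - \<epsilon>)^2/16) * ln N) * exp (96*\<Omega> + 9*A) / M"
    unfolding below_threshold_error_def Let_def A_def \<Omega>_def M_def by simp
  define k where "k = nat \<lfloor>(1 - \<epsilon>) * cover_threshold G\<rfloor>"
  define t where "t = real k / N"
  define \<kappa> where "\<kappa> = real k ^ 2 / N"
  define \<xi> where "\<xi> = Theta G"
  define \<delta> where "\<delta> = 1 / ln N"
  note bounds = below_threshold_bounds[OF n2 e c1 c2, folded k_def \<kappa>_def \<xi>_def]
  have L0: "ln N > 0" using n2 by simp
  have \<delta>0: "\<delta> > 0" unfolding \<delta>_def using L0 by simp
  have \<kappa>0: "\<kappa> \<ge> 0" unfolding \<kappa>_def by simp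
  have \<kappa>t: "\<kappa> * t \<le> A" and \<omega>: "\<kappa> * t * exp (20*t) \<le> \<Omega>"
    using cube_error_le[OF _ bounds(1), of "real N"] N_pos unfolding \<kappa>_def t_def A_def \<Omega>_def by auto
  have gap: "\<epsilon>/2 * ln N \<le> \<xi> * ln N - \<kappa>" and \<kappa>L: "\<kappa> \<le> ln N" using bounds(4,5) .
  have "0 < \<epsilon>/2 * ln N" using e L0 by simp
  then have small: "\<kappa> \<le> \<xi> * ln N" using gap by linarith
  have \<mu>: "(\<Sum>g\<in>carrier G. prob_uncovered k g) \<ge> M"
  proof -
    have "(\<Sum>g\<in>carrier G. prob_uncovered k g) \<ge> exp (\<xi> * ln N - \<kappa> - 9 * (\<kappa> * t))"
      using sum_prob_uncovered_ge[OF n2 bounds(2)] small unfolding t_def \<kappa>_def \<xi>_def by simp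
    moreover have "\<xi> * ln N - \<kappa> - 9 * (\<kappa> * t) \<ge> \<epsilon>/2 * ln N - 9 * A" using gap \<kappa>t by simp
    ultimately show ?thesis unfolding M_def by (meson exp_le_cancel_iff order_trans)
  qed
  have "\<kappa>/\<delta> * exp (- \<kappa> / 2 + 96 * (\<kappa> * t * exp (20*t)) + 9 * (\<kappa> * t))
      \<le> (ln N)^2 * exp (- ((1 - \<epsilon>)^2/16) * ln N) * exp (96*\<Omega> + 9*A)"
  proof -
    have p1: "\<kappa>/\<delta> \<le> (ln N)^2" unfolding \<delta>_def using \<kappa>L L0 by (simp add: power2_eq_square mult_right_mono)
    have "- \<kappa> / 2 + 96 * (\<kappa> * t * exp (20*t)) + 9 * (\<kappa> * t)
        \<le> - ((1 - \<epsilon>)^2/16) * ln N + (96*\<Omega> + 9*A)"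
      using bounds(3) \<omega> \<kappa>t by linarith
    then have p2: "exp (- \<kappa> / 2 + 96 * (\<kappa> * t * exp (20*t)) + 9 * (\<kappa> * t))
        \<le> exp (- ((1 - \<epsilon>)^2/16) * ln N) * exp (96*\<Omega> + 9*A)"
      unfolding exp_add[symmetric] by simp
    have "\<kappa>/\<delta> * exp (- \<kappa> / 2 + 96 * (\<kappa> * t * exp (20*t)) + 9 * (\<kappa> * t))
        \<le> (ln N)^2 * (exp (- ((1 - \<epsilon>)^2/16) * ln N) * exp (96*\<Omega> + 9*A))"
      by (rule mult_mono[OF p1 p2]) simp_all
    then show ?thesis by (simp only: mult.assoc)
  qed
  moreover have "exp (96 * (\<kappa> * t * exp (20*t)) + 18 * (\<kappa> * t) + 2 * \<delta>) \<le> exp (96*\<Omega> + 18*A + 2/ln N)"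
    unfolding \<delta>_def using \<omega> \<kappa>t by simp
  moreover have "M > 0" unfolding M_def by simp
  ultimately show ?thesis
    using Pcov_le_error[OF \<delta>0 bounds(2) _ \<mu>] unfolding error k_def[symmetric] t_def[symmetric] \<kappa>_def[symmetric]
    by (smt (verit) divide_right_mono)
qed

end

lemma Pcov_above_threshold_tendsto_1:
  fixes G :: "nat \<Rightarrow> ('a, 'b) monoid_scheme" and \<epsilon> :: real
  assumes G: "\<And>n. finite_group (G n)"
    and lim: "filterlim (\<lambda>n. real (card (carrier (G n)))) at_top sequentially" and e: "\<epsilon> > 0"
  shows "(\<lambda>n. Pcov (G n) (nat \<lceil>(1 + \<epsilon>) * cover_threshold (G n)\<rceil>)) \<longlonglongrightarrow> 1"
proof (rule tendsto_sandwich)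
  have "(\<lambda>n. above_threshold_error \<epsilon> (real (card (carrier (G n))))) \<longlonglongrightarrow> 0"
    using above_threshold_error_tendsto_0[OF e] lim by (rule filterlim_compose)
  then show "(\<lambda>n. 1 - above_threshold_error \<epsilon> (real (card (carrier (G n))))) \<longlonglongrightarrow> 1"
    using tendsto_diff[OF tendsto_const, of _ 0 _ "1::real"] by simp
  have "eventually (\<lambda>n. real (card (carrier (G n))) \<ge> 2) sequentially"
    using filterlim_at_top[THEN iffD1, OF lim, rule_format, of 2] .
  then show "eventually (\<lambda>n. 1 - above_threshold_error \<epsilon> (real (card (carrier (G n))))
      \<le> Pcov (G n) (nat \<lceil>(1 + \<epsilon>) * cover_threshold (G n)\<rceil>)) sequentially"
    by eventually_elim (use finite_group.one_minus_Pcov_above_le[OF G] e in force)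
  show "eventually (\<lambda>n. Pcov (G n) (nat \<lceil>(1 + \<epsilon>) * cover_threshold (G n)\<rceil>) \<le> 1) sequentially"
    using finite_group.Pcov_le_1[OF G] by simp
qed simp

lemma Pcov_below_threshold_tendsto_0:
  fixes G :: "nat \<Rightarrow> ('a, 'b) monoid_scheme" and \<epsilon> :: real
  assumes G: "\<And>n. finite_group (G n)"
    and lim: "filterlim (\<lambda>n. real (card (carrier (G n)))) at_top sequentially" and e: "\<epsilon> > 0"
  shows "(\<lambda>n. Pcov (G n) (nat \<lfloor>(1 - \<epsilon>) * cover_threshold (G n)\<rfloor>)) \<longlonglongrightarrow> 0"
proof (cases "\<epsilon> < 1")
  case False
  have "eventually (\<lambda>n. real (card (carrier (G n))) \<ge> 2) sequentially"
    using filterlim_at_top[THEN iffD1, OF lim, rule_format, of 2] .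
  then have "eventually (\<lambda>n. Pcov (G n) (nat \<lfloor>(1 - \<epsilon>) * cover_threshold (G n)\<rfloor>) = 0) sequentially"
    by eventually_elim (use finite_group.Pcov_below_threshold_eq_0[OF G] False in force)
  then show ?thesis by (rule tendsto_eventually)
next
  case True
  show ?thesis
  proof (rule tendsto_sandwich[where f="\<lambda>_. 0"
        and h="\<lambda>n. below_threshold_error \<epsilon> (real (card (carrier (G n))))"])
    show "(\<lambda>n. below_threshold_error \<epsilon> (real (card (carrier (G n))))) \<longlonglongrightarrow> 0"
      using below_threshold_error_tendsto_0[OF e True] lim by (rule filterlim_compose)
    show "eventually (\<lambda>n. Pcov (G n) (nat \<lfloor>(1 - \<epsilon>) * cover_threshold (G n)\<rfloor>)
        \<le> below_threshold_error \<epsilon> (real (card (carrier (G n))))) sequentially"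
      using eventually_compose_filterlim[OF eventually_below_threshold_conditions[OF True] lim]
      by eventually_elim (use finite_group.Pcov_below_le[OF G] e True in force)
    show "eventually (\<lambda>n. 0 \<le> Pcov (G n) (nat \<lfloor>(1 - \<epsilon>) * cover_threshold (G n)\<rfloor>)) sequentially"
      using finite_group.Pcov_nonneg[OF G] by simp
  qed simp
qed

theorem theorem1p1:
  fixes G :: "nat \<Rightarrow> 'a monoid" and \<epsilon> :: real
  assumes "\<And>n. group (G n)"
    and "\<And>n. finite (carrier (G n))"
    and "filterlim (\<lambda>n. card (carrier (G n))) at_top sequentially"
    and "\<epsilon> > 0"
  shows "(\<lambda>n. Pcov (G n) (nat \<lceil>(1 + \<epsilon>) * sqrt (Theta (G n) * real (card (carrier (G n))) * ln (real (card (carrier (G n)))))\<rceil>)) \<longlonglongrightarrow> 1 \<and>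
     (\<lambda>n. Pcov (G n) (nat \<lfloor>(1 - \<epsilon>) * sqrt (Theta (G n) * real (card (carrier (G n))) * ln (real (card (carrier (G n)))))\<rfloor>)) \<longlonglongrightarrow> 0"
proof -
  have G: "finite_group (G n)" for n
    using assms(1,2) by (simp add: finite_group_def finite_group_axioms_def)
  have lim: "filterlim (\<lambda>n. real (card (carrier (G n)))) at_top sequentially"
    using filterlim_compose[OF filterlim_real_sequentially assms(3)] .
  show ?thesis
    using Pcov_above_threshold_tendsto_1[OF G lim assms(4)] Pcov_below_threshold_tendsto_0[OF G lim assms(4)]
    unfolding cover_threshold_def by blast
qed

end
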